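(* Let $n\ge2$ and let $\gamma:I\to\mathbb{R}^2$ be a $C^\infty$ curve with $0\in I$. Then $\gamma'(0)=\cdots=\gamma^{(n-1)}(0)=\mathbf{0}$ and $\det(\gamma^{(n)}(0),\gamma^{(n+1)}(0))\neq0$ if and only if there is a real number $T$ such that $\gamma$ is $\mathcal{A}$-equivalent at $s=0$ to $\tilde\gamma(s)=(s^n,\ s^{n+1}+Ts^{n+3})+h(s)$, where $h$ is an $\mathbb{R}^2$-valued $C^\infty$ function with $h(0)=h'(0)=\cdots=h^{(n+3)}(0)=\mathbf{0}$.
   Context: $\mathcal{A}$-equivalence of curve germs: existence of $C^\infty$ diffeomorphism germs $\psi$ of $(\mathbb{R},0)$ and $\Psi$ of $\mathbb{R}^2$ with $\Psi\circ\gamma_1\circ\psi^{-1}=\gamma_2$. *)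

theory Defs
  imports "HOL-Analysis.Analysis"
begin

fun Ck_on :: "nat \<Rightarrow> 'a::real_normed_vector set \<Rightarrow> ('a \<Rightarrow> 'b::real_normed_vector) \<Rightarrow> bool" where
  "Ck_on 0 S f = continuous_on S f"
| "Ck_on (Suc k) S f =
     ((\<forall>x\<in>S. f differentiable (at x)) \<and>
      (\<forall>v. Ck_on k S (\<lambda>x. frechet_derivative f (at x) v)))"

definition smooth_on :: "'a::real_normed_vector set \<Rightarrow> ('a \<Rightarrow> 'b::real_normed_vector) \<Rightarrow> bool" where
  "smooth_on S f \<longleftrightarrow> (\<forall>k. Ck_on k S f)"

fun nth_deriv :: "nat \<Rightarrow> (real \<Rightarrow> 'b::real_normed_vector) \<Rightarrow> real \<Rightarrow> 'b" where
  "nth_deriv 0 f = f"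
| "nth_deriv (Suc k) f = (\<lambda>t. vector_derivative (nth_deriv k f) (at t))"

definition det2 :: "real \<times> real \<Rightarrow> real \<times> real \<Rightarrow> real" where
  "det2 u v = fst u * snd v - snd u * fst v"

definition local_diffeo_at ::
  "'a::real_normed_vector \<Rightarrow> ('a \<Rightarrow> 'a) \<Rightarrow> ('a \<Rightarrow> 'a) \<Rightarrow> bool" where
  "local_diffeo_at p Phi Phii \<longleftrightarrow>
     (\<exists>U V. open U \<and> p \<in> U \<and> open V \<and> Phi ` U = V \<and> Phii ` V = U \<and>
        smooth_on U Phi \<and> smooth_on V Phii \<and>
        (\<forall>x\<in>U. Phii (Phi x) = x) \<and> (\<forall>y\<in>V. Phi (Phii y) = y))"

text \<open>A-equivalence of curve germs at s = 0: there are diffeomorphism germs psi of (R,0)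
  and Psi of R^2 (at gamma1 0) with Psi o gamma1 o psi^-1 = gamma2 near 0.\<close>
definition A_equiv_at0 :: "(real \<Rightarrow> real \<times> real) \<Rightarrow> (real \<Rightarrow> real \<times> real) \<Rightarrow> bool" where
  "A_equiv_at0 g1 g2 \<longleftrightarrow>
     (\<exists>psi psii Psi Psii.
        psi 0 = 0 \<and> local_diffeo_at 0 psi psii \<and>
        local_diffeo_at (g1 0) Psi Psii \<and>
        (\<forall>\<^sub>F s in nhds 0. Psi (g1 (psii s)) = g2 s))"

end

theory Submission
  imports Defs
begin

fun curve_Ck_on :: "nat \<Rightarrow> real set \<Rightarrow> (real \<Rightarrow> 'b::real_normed_vector) \<Rightarrow> bool" where
  "curve_Ck_on 0 S f = continuous_on S f"
| "curve_Ck_on (Suc k) S f = (\<exists>f'. (\<forall>x\<in>S. (f has_vector_derivative f' x) (at x)) \<and> curve_Ck_on k S f')"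

lemma curve_Ck_on_cong:
  assumes "open S" "\<And>x. x \<in> S \<Longrightarrow> f x = g x" "curve_Ck_on k S f"
  shows "curve_Ck_on k S g"
  using assms
proof (induction k arbitrary: f g)
  case 0
  then show ?case using continuous_on_cong by (metis curve_Ck_on.simps(1))
next
  case (Suc k)
  then obtain f' where d: "\<forall>x\<in>S. (f has_vector_derivative f' x) (at x)" and c: "curve_Ck_on k S f'" by auto
  have "\<forall>x\<in>S. (g has_vector_derivative f' x) (at x)"
    using d Suc.prems(1,2) has_vector_derivative_transform_within_open by metis
  then show ?case using c by auto
qed

lemma curve_Ck_on_Suc_imp: "curve_Ck_on (Suc k) S f \<Longrightarrow> curve_Ck_on k S f"
proof (induction k arbitrary: f)
  case 0
  then obtain f' where d: "\<forall>x\<in>S. (f has_vector_derivative f' x) (at x)" by auto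
  then have "\<forall>x\<in>S. isCont f x"
    using has_vector_derivative_continuous by blast
  then show ?case by (simp add: continuous_at_imp_continuous_on)
next
  case (Suc k)
  then obtain f' where d: "\<forall>x\<in>S. (f has_vector_derivative f' x) (at x)" and c: "curve_Ck_on (Suc k) S f'"
    by (metis curve_Ck_on.simps(2))
  then show ?case using Suc.IH by auto
qed

lemma curve_Ck_on_le: "k \<le> m \<Longrightarrow> curve_Ck_on m S f \<Longrightarrow> curve_Ck_on k S f"
proof (induction m)
  case 0 then show ?case by simp
next
  case (Suc m)
  then show ?case using curve_Ck_on_Suc_imp le_Suc_eq by blast
qed

lemma curve_Ck_on_imp_continuous_on: "curve_Ck_on k S f \<Longrightarrow> continuous_on S f"
  using curve_Ck_on_le[of 0 k] by simp

lemma curve_Ck_on_subset: "T \<subseteq> S \<Longrightarrow> curve_Ck_on k S f \<Longrightarrow> curve_Ck_on k T f"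
proof (induction k arbitrary: f)
  case 0 then show ?case using continuous_on_subset by auto
next
  case (Suc k)
  then show ?case by (metis curve_Ck_on.simps(2) subsetD)
qed

lemma curve_Ck_on_const: "curve_Ck_on k S (\<lambda>x. c)"
proof (induction k arbitrary: c)
  case 0 then show ?case by simp
next
  case (Suc k)
  have "\<forall>x\<in>S. ((\<lambda>x. c) has_vector_derivative 0) (at x)"
    by (auto intro: derivative_eq_intros)
  then show ?case using Suc[of 0] unfolding curve_Ck_on.simps by (intro exI[of _ "\<lambda>x. 0"]) auto
qed

lemma curve_Ck_on_add: "curve_Ck_on k S f \<Longrightarrow> curve_Ck_on k S g \<Longrightarrow> curve_Ck_on k S (\<lambda>x. f x + g x)"
proof (induction k arbitrary: f g)
  case 0 then show ?case by (simp add: continuous_on_add)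
next
  case (Suc k)
  then obtain f' g' where "\<forall>x\<in>S. (f has_vector_derivative f' x) (at x)" "curve_Ck_on k S f'"
    "\<forall>x\<in>S. (g has_vector_derivative g' x) (at x)" "curve_Ck_on k S g'" by auto
  then show ?case using Suc.IH
    by (auto intro!: exI[of _ "\<lambda>x. f' x + g' x"] has_vector_derivative_add)
qed

lemma curve_Ck_on_scaleR:
  fixes f :: "real \<Rightarrow> real" and g :: "real \<Rightarrow> 'b::real_normed_vector"
  shows "curve_Ck_on k S f \<Longrightarrow> curve_Ck_on k S g \<Longrightarrow> curve_Ck_on k S (\<lambda>x. f x *\<^sub>R g x)"
proof (induction k arbitrary: f g)
  case 0 then show ?case by (simp add: continuous_on_scaleR)
next
  case (Suc k)
  then obtain f' g' where fd: "\<forall>x\<in>S. (f has_vector_derivative f' x) (at x)" and f'c: "curve_Ck_on k S f'"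
    and gd: "\<forall>x\<in>S. (g has_vector_derivative g' x) (at x)" and g'c: "curve_Ck_on k S g'" by auto
  have fc: "curve_Ck_on k S f" "curve_Ck_on k S g" using Suc.prems curve_Ck_on_Suc_imp by blast+
  have "\<forall>x\<in>S. ((\<lambda>x. f x *\<^sub>R g x) has_vector_derivative (f x *\<^sub>R g' x + f' x *\<^sub>R g x)) (at x)"
    using fd gd has_vector_derivative_scaleR[of f _ _ _ g] by (auto simp: has_real_derivative_iff_has_vector_derivative)
  moreover have "curve_Ck_on k S (\<lambda>x. f x *\<^sub>R g' x + f' x *\<^sub>R g x)"
    using Suc.IH fc f'c g'c by (intro curve_Ck_on_add) auto
  ultimately show ?case by auto
qed

lemma curve_Ck_on_mult:
  fixes f g :: "real \<Rightarrow> real"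
  shows "curve_Ck_on k S f \<Longrightarrow> curve_Ck_on k S g \<Longrightarrow> curve_Ck_on k S (\<lambda>x. f x * g x)"
  using curve_Ck_on_scaleR[of k S f g] by simp

lemma curve_Ck_on_cscale: "curve_Ck_on k S g \<Longrightarrow> curve_Ck_on k S (\<lambda>x. c *\<^sub>R g x)"
  using curve_Ck_on_scaleR[OF curve_Ck_on_const] by blast

lemma curve_Ck_on_uminus: "curve_Ck_on k S g \<Longrightarrow> curve_Ck_on k S (\<lambda>x. - g x)"
  using curve_Ck_on_cscale[of k S g "-1"] by simp

lemma curve_Ck_on_diff: "curve_Ck_on k S f \<Longrightarrow> curve_Ck_on k S g \<Longrightarrow> curve_Ck_on k S (\<lambda>x. f x - g x)"
  using curve_Ck_on_add[of k S f "\<lambda>x. - g x"] curve_Ck_on_uminus by fastforce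

lemma curve_Ck_on_id: "curve_Ck_on k S (\<lambda>x. x)"
proof (cases k)
  case 0 then show ?thesis by (simp add: continuous_on_id)
next
  case (Suc m)
  have "\<forall>x\<in>S. ((\<lambda>x. x) has_vector_derivative (1::real)) (at x)"
    by (auto intro: derivative_eq_intros)
  then have "curve_Ck_on (Suc m) S (\<lambda>x. x)" using curve_Ck_on_const[of m S 1] unfolding curve_Ck_on.simps by (intro exI[of _ "\<lambda>x. 1"]) auto
  then show ?thesis using Suc by simp
qed

lemma curve_Ck_on_pow: "curve_Ck_on k S (\<lambda>x::real. x ^ j)"
  by (induction j) (auto intro: curve_Ck_on_mult curve_Ck_on_id curve_Ck_on_const)

lemma curve_Ck_on_Pair:
  fixes f g :: "real \<Rightarrow> real"
  shows "curve_Ck_on k S f \<Longrightarrow> curve_Ck_on k S g \<Longrightarrow> curve_Ck_on k S (\<lambda>x. (f x, g x))"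
proof (induction k arbitrary: f g)
  case 0 then show ?case by (simp add: continuous_on_Pair)
next
  case (Suc k)
  then obtain f' g' where "\<forall>x\<in>S. (f has_vector_derivative f' x) (at x)" "curve_Ck_on k S f'"
    "\<forall>x\<in>S. (g has_vector_derivative g' x) (at x)" "curve_Ck_on k S g'" by auto
  then show ?case using Suc.IH
    by (auto intro!: exI[of _ "\<lambda>x. (f' x, g' x)"] has_vector_derivative_Pair)
qed

lemma curve_Ck_on_fst:
  fixes c :: "real \<Rightarrow> 'a::real_normed_vector \<times> 'b::real_normed_vector"
  shows "curve_Ck_on k S c \<Longrightarrow> curve_Ck_on k S (\<lambda>x. fst (c x))"
proof (induction k arbitrary: c)
  case 0 then show ?case by (simp add: continuous_on_fst)
next
  case (Suc k)
  then obtain c' where d: "\<forall>x\<in>S. (c has_vector_derivative c' x) (at x)" "curve_Ck_on k S c'" by auto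
  have "\<forall>x\<in>S. ((\<lambda>x. fst (c x)) has_vector_derivative fst (c' x)) (at x)"
    using d(1) unfolding has_vector_derivative_def
    by (auto intro!: derivative_eq_intros)
  then show ?case using Suc.IH d(2) by auto
qed

lemma curve_Ck_on_snd:
  fixes c :: "real \<Rightarrow> 'a::real_normed_vector \<times> 'b::real_normed_vector"
  shows "curve_Ck_on k S c \<Longrightarrow> curve_Ck_on k S (\<lambda>x. snd (c x))"
proof (induction k arbitrary: c)
  case 0 then show ?case by (simp add: continuous_on_snd)
next
  case (Suc k)
  then obtain c' where d: "\<forall>x\<in>S. (c has_vector_derivative c' x) (at x)" "curve_Ck_on k S c'" by auto
  have "\<forall>x\<in>S. ((\<lambda>x. snd (c x)) has_vector_derivative snd (c' x)) (at x)"
    using d(1) unfolding has_vector_derivative_def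
    by (auto intro!: derivative_eq_intros)
  then show ?case using Suc.IH d(2) by auto
qed

lemma curve_Ck_on_comp:
  fixes f :: "real \<Rightarrow> 'b::real_normed_vector" and g :: "real \<Rightarrow> real"
  shows "curve_Ck_on k T f \<Longrightarrow> curve_Ck_on k S g \<Longrightarrow> g ` S \<subseteq> T \<Longrightarrow> curve_Ck_on k S (\<lambda>x. f (g x))"
proof (induction k arbitrary: f g)
  case 0 then show ?case using continuous_on_compose2 by (metis curve_Ck_on.simps(1))
next
  case (Suc k)
  then obtain f' g' where fd: "\<forall>x\<in>T. (f has_vector_derivative f' x) (at x)" and f'c: "curve_Ck_on k T f'"
    and gd: "\<forall>x\<in>S. (g has_vector_derivative g' x) (at x)" and g'c: "curve_Ck_on k S g'" by auto
  have gc: "curve_Ck_on k S g" using Suc.prems curve_Ck_on_Suc_imp by blast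
  have "\<forall>x\<in>S. ((\<lambda>x. f (g x)) has_vector_derivative (g' x *\<^sub>R f' (g x))) (at x)"
    using fd gd Suc.prems(3) vector_diff_chain_at[of g _ _ f] by (auto simp: o_def)
  moreover have "curve_Ck_on k S (\<lambda>x. g' x *\<^sub>R f' (g x))"
    using Suc.IH[OF f'c gc Suc.prems(3)] g'c by (intro curve_Ck_on_scaleR)
  ultimately show ?case by auto
qed

lemma curve_Ck_on_inverse_base: "curve_Ck_on k (-{0}) (\<lambda>y::real. inverse y)"
proof (induction k)
  case 0 then show ?case by (simp add: continuous_on_inverse continuous_on_id)
next
  case (Suc k)
  have "\<forall>x\<in>-{0}. ((\<lambda>y::real. inverse y) has_vector_derivative (- (inverse x * inverse x))) (at x)"
    by (auto intro!: derivative_eq_intros simp: has_real_derivative_iff_has_vector_derivative[symmetric]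
        power2_eq_square)
  moreover have "curve_Ck_on k (-{0}) (\<lambda>x::real. - (inverse x * inverse x))"
    using Suc by (intro curve_Ck_on_uminus curve_Ck_on_mult)
  ultimately show ?case by auto
qed

lemma curve_Ck_on_inverse:
  fixes f :: "real \<Rightarrow> real"
  shows "curve_Ck_on k S f \<Longrightarrow> (\<And>x. x \<in> S \<Longrightarrow> f x \<noteq> 0) \<Longrightarrow> curve_Ck_on k S (\<lambda>x. inverse (f x))"
proof -
  assume a: "curve_Ck_on k S f" "\<And>x. x \<in> S \<Longrightarrow> f x \<noteq> 0"
  then have "f ` S \<subseteq> -{0}" by auto
  then show ?thesis using curve_Ck_on_comp[OF curve_Ck_on_inverse_base a(1)] by blast
qed

definition curve_smooth_on :: "real set \<Rightarrow> (real \<Rightarrow> 'b::real_normed_vector) \<Rightarrow> bool" where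
  "curve_smooth_on S f \<longleftrightarrow> (\<forall>k. curve_Ck_on k S f)"

lemma Ck_on_iff_curve_Ck_on:
  fixes f :: "real \<Rightarrow> 'b::real_normed_vector"
  assumes "open S"
  shows "Ck_on k S f \<longleftrightarrow> curve_Ck_on k S f"
proof (induction k arbitrary: f)
  case 0 then show ?case by simp
next
  case (Suc k)
  show ?case
  proof
    assume A: "Ck_on (Suc k) S f"
    then have dif: "\<forall>x\<in>S. f differentiable (at x)" and C: "Ck_on k S (\<lambda>x. frechet_derivative f (at x) 1)"
      by auto
    have "\<forall>x\<in>S. (f has_vector_derivative frechet_derivative f (at x) 1) (at x)"
    proof
      fix x assume "x \<in> S"
      then have fd: "(f has_derivative frechet_derivative f (at x)) (at x)"
        using dif frechet_derivative_works by blast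
      have lin: "linear (frechet_derivative f (at x))"
        using dif \<open>x \<in> S\<close> linear_frechet_derivative by blast
      have "frechet_derivative f (at x) = (\<lambda>h. h *\<^sub>R frechet_derivative f (at x) 1)"
      proof
        fix h :: real
        show "frechet_derivative f (at x) h = h *\<^sub>R frechet_derivative f (at x) 1"
          using linear_scale[OF lin, of h 1] by simp
      qed
      then show "(f has_vector_derivative frechet_derivative f (at x) 1) (at x)"
        using fd unfolding has_vector_derivative_def by metis
    qed
    then show "curve_Ck_on (Suc k) S f" using C Suc.IH by auto
  next
    assume "curve_Ck_on (Suc k) S f"
    then obtain f' where d: "\<forall>x\<in>S. (f has_vector_derivative f' x) (at x)" and c: "curve_Ck_on k S f'" by auto
    have dif: "\<forall>x\<in>S. f differentiable (at x)" using d differentiableI_vector by blast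
    have "Ck_on k S (\<lambda>x. frechet_derivative f (at x) v)" for v
    proof -
      have "\<forall>x\<in>S. frechet_derivative f (at x) v = v *\<^sub>R f' x"
        using d frechet_derivative_at unfolding has_vector_derivative_def by metis
      then have "curve_Ck_on k S (\<lambda>x. frechet_derivative f (at x) v)"
        using curve_Ck_on_cong[OF assms _ curve_Ck_on_cscale[OF c, of v]] by metis
      then show ?thesis using Suc.IH by simp
    qed
    then show "Ck_on (Suc k) S f" using dif by simp
  qed
qed

lemma smooth_on_iff_curve_smooth_on:
  fixes f :: "real \<Rightarrow> 'b::real_normed_vector"
  assumes "open S" shows "smooth_on S f \<longleftrightarrow> curve_smooth_on S f"
  unfolding smooth_on_def curve_smooth_on_def using Ck_on_iff_curve_Ck_on[OF assms, where 'b='b] by blast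

lemma curve_Ck_on_Suc_vector_derivative:
  assumes "open S" "curve_Ck_on (Suc k) S f"
  shows "(\<forall>x\<in>S. (f has_vector_derivative vector_derivative f (at x)) (at x)) \<and>
         curve_Ck_on k S (\<lambda>x. vector_derivative f (at x))"
proof -
  obtain f' where d: "\<forall>x\<in>S. (f has_vector_derivative f' x) (at x)" and c: "curve_Ck_on k S f'"
    using assms(2) by auto
  have e: "\<forall>x\<in>S. vector_derivative f (at x) = f' x" using d vector_derivative_at by blast
  show ?thesis using d e curve_Ck_on_cong[OF assms(1) _ c, of "\<lambda>x. vector_derivative f (at x)"] by auto
qed

lemma curve_smooth_on_vector_derivative:
  assumes "open S" "curve_smooth_on S f"
  shows "(\<forall>x\<in>S. (f has_vector_derivative vector_derivative f (at x)) (at x)) \<and>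
         curve_smooth_on S (\<lambda>x. vector_derivative f (at x))"
  using curve_Ck_on_Suc_vector_derivative[OF assms(1)] assms(2) unfolding curve_smooth_on_def by blast

lemma curve_smooth_on_nth_deriv:
  assumes "open S" "curve_smooth_on S f"
  shows "curve_smooth_on S (nth_deriv j f) \<and>
     (\<forall>x\<in>S. (nth_deriv j f has_vector_derivative nth_deriv (Suc j) f x) (at x))"
proof (induction j)
  case 0 then show ?case using curve_smooth_on_vector_derivative[OF assms] assms by auto
next
  case (Suc j)
  then show ?case using curve_smooth_on_vector_derivative[OF assms(1), of "nth_deriv j f"]
      curve_smooth_on_vector_derivative[OF assms(1), of "nth_deriv (Suc j) f"] by simp
qed

lemma nth_deriv_Suc_right: "nth_deriv (Suc k) f = nth_deriv k (nth_deriv 1 f)"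
  by (induction k) auto

lemma curve_smooth_on_subset: "T \<subseteq> S \<Longrightarrow> curve_smooth_on S f \<Longrightarrow> curve_smooth_on T f"
  unfolding curve_smooth_on_def using curve_Ck_on_subset by blast


lemma curve_Ck_on_divide_const: "curve_Ck_on k S f \<Longrightarrow> curve_Ck_on k S (\<lambda>x. (f x :: real) / c)"
  using curve_Ck_on_mult[OF _ curve_Ck_on_const, of k S f "inverse c"] by (simp add: divide_inverse)

lemma curve_smooth_on_intros:
  "curve_smooth_on S (\<lambda>x. c)" "curve_smooth_on S (\<lambda>x. x)" "curve_smooth_on S (\<lambda>x::real. x ^ j)"
  "curve_smooth_on S f \<Longrightarrow> curve_smooth_on S g \<Longrightarrow> curve_smooth_on S (\<lambda>x. f x + g x)"
  "curve_smooth_on S f \<Longrightarrow> curve_smooth_on S g \<Longrightarrow> curve_smooth_on S (\<lambda>x. f x - g x)"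
  "curve_smooth_on S u \<Longrightarrow> curve_smooth_on S g \<Longrightarrow> curve_smooth_on S (\<lambda>x. u x *\<^sub>R g x)"
  "curve_smooth_on S u \<Longrightarrow> curve_smooth_on S v \<Longrightarrow> curve_smooth_on S (\<lambda>x. u x * v x)"
  "curve_smooth_on S u \<Longrightarrow> curve_smooth_on S (\<lambda>x. u x / c)"
  "curve_smooth_on S F \<Longrightarrow> curve_smooth_on S (\<lambda>x. fst (F x))"
  "curve_smooth_on S F \<Longrightarrow> curve_smooth_on S (\<lambda>x. snd (F x))"
  "curve_smooth_on S u \<Longrightarrow> curve_smooth_on S v \<Longrightarrow> curve_smooth_on S (\<lambda>x. (u x, v x))"
  unfolding curve_smooth_on_def
  by (auto intro: curve_Ck_on_const curve_Ck_on_id curve_Ck_on_add curve_Ck_on_diff curve_Ck_on_scaleR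
      curve_Ck_on_mult curve_Ck_on_divide_const curve_Ck_on_pow curve_Ck_on_fst curve_Ck_on_snd curve_Ck_on_Pair)

definition smooth_near0 :: "(real \<Rightarrow> 'b::real_normed_vector) \<Rightarrow> bool" where
  "smooth_near0 f \<longleftrightarrow> (\<exists>S. open S \<and> 0 \<in> S \<and> curve_smooth_on S f)"

lemma smooth_near0I: "open S \<Longrightarrow> 0 \<in> S \<Longrightarrow> curve_smooth_on S f \<Longrightarrow> smooth_near0 f"
  unfolding smooth_near0_def by blast

lemma smooth_near0_common_nhd:
  assumes "smooth_near0 f" "smooth_near0 g"
  obtains S where "open S" "0 \<in> S" "curve_smooth_on S f" "curve_smooth_on S g"
proof -
  obtain S T where S: "open S" "0 \<in> S" "curve_smooth_on S f" and T: "open T" "0 \<in> T" "curve_smooth_on T g"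
    using assms unfolding smooth_near0_def by blast
  show ?thesis
  proof (rule that[of "S \<inter> T"])
    show "curve_smooth_on (S \<inter> T) f" "curve_smooth_on (S \<inter> T) g"
      using curve_smooth_on_subset[of "S \<inter> T"] S(3) T(3) by auto
  qed (use S T in auto)
qed

lemma smooth_near0_const: "smooth_near0 (\<lambda>x. c)"
  by (rule smooth_near0I[OF open_UNIV UNIV_I]) (simp add: curve_smooth_on_def curve_Ck_on_const)

lemma smooth_near0_power: "smooth_near0 (\<lambda>x::real. x ^ j)"
  by (rule smooth_near0I[OF open_UNIV UNIV_I]) (simp add: curve_smooth_on_def curve_Ck_on_pow)

lemma smooth_near0_fst: "smooth_near0 F \<Longrightarrow> smooth_near0 (\<lambda>x. fst (F x))"
  and smooth_near0_snd: "smooth_near0 F \<Longrightarrow> smooth_near0 (\<lambda>x. snd (F x))"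
  unfolding smooth_near0_def by (metis curve_smooth_on_intros(9), metis curve_smooth_on_intros(10))

lemma smooth_near0_add:
  assumes "smooth_near0 f" "smooth_near0 g" shows "smooth_near0 (\<lambda>x. f x + g x)"
proof -
  obtain S where "open S" "0 \<in> S" "curve_smooth_on S f" "curve_smooth_on S g"
    using smooth_near0_common_nhd[OF assms] .
  then show ?thesis by (intro smooth_near0I[of S] curve_smooth_on_intros(4))
qed

lemma smooth_near0_diff:
  assumes "smooth_near0 f" "smooth_near0 g" shows "smooth_near0 (\<lambda>x. f x - g x)"
proof -
  obtain S where "open S" "0 \<in> S" "curve_smooth_on S f" "curve_smooth_on S g"
    using smooth_near0_common_nhd[OF assms] .
  then show ?thesis by (intro smooth_near0I[of S] curve_smooth_on_intros(5))
qed

lemma smooth_near0_mult: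
  fixes u v :: "real \<Rightarrow> real"
  assumes "smooth_near0 u" "smooth_near0 v" shows "smooth_near0 (\<lambda>x. u x * v x)"
proof -
  obtain S where "open S" "0 \<in> S" "curve_smooth_on S u" "curve_smooth_on S v"
    using smooth_near0_common_nhd[OF assms] .
  then show ?thesis by (intro smooth_near0I[of S] curve_smooth_on_intros(7))
qed

lemma smooth_near0_Pair:
  fixes u v :: "real \<Rightarrow> real"
  assumes "smooth_near0 u" "smooth_near0 v" shows "smooth_near0 (\<lambda>x. (u x, v x))"
proof -
  obtain S where "open S" "0 \<in> S" "curve_smooth_on S u" "curve_smooth_on S v"
    using smooth_near0_common_nhd[OF assms] .
  then show ?thesis by (intro smooth_near0I[of S] curve_smooth_on_intros(11))
qed

lemmas smooth_near0_intros = smooth_near0_const smooth_near0_power smooth_near0_fst smooth_near0_snd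
  smooth_near0_add smooth_near0_diff smooth_near0_mult smooth_near0_Pair

lemma smooth_near0_compose:
  assumes "smooth_near0 f" "curve_smooth_on UNIV \<phi>" "\<phi> 0 = 0"
  shows "smooth_near0 (\<lambda>s. f (\<phi> s))"
proof -
  obtain S where S: "open S" "0 \<in> S" "curve_smooth_on S f" using assms(1) unfolding smooth_near0_def by blast
  have "continuous_on UNIV \<phi>"
    using assms(2) curve_Ck_on_imp_continuous_on unfolding curve_smooth_on_def by blast
  then have "open (\<phi> -` S)" using S(1) open_vimage by blast
  moreover have "curve_smooth_on (\<phi> -` S) (\<lambda>s. f (\<phi> s))"
    using S(3) assms(2) curve_Ck_on_comp[of _ S f "\<phi> -` S" \<phi>] curve_Ck_on_subset[of "\<phi> -` S" UNIV]
    unfolding curve_smooth_on_def by blast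
  ultimately show ?thesis using S(2) assms(3) by (intro smooth_near0I[of "\<phi> -` S"]) auto
qed

lemma smooth_near0_nth_deriv:
  assumes "smooth_near0 f" shows "smooth_near0 (nth_deriv j f)"
proof -
  obtain S where "open S" "0 \<in> S" "curve_smooth_on S f" using assms unfolding smooth_near0_def by blast
  then show ?thesis using curve_smooth_on_nth_deriv[of S f j] by (intro smooth_near0I[of S]) auto
qed

declare nth_deriv.simps(2)[simp del]

definition bigO_at0 :: "nat \<Rightarrow> (real \<Rightarrow> 'b::real_normed_vector) \<Rightarrow> bool" where
  "bigO_at0 m f \<longleftrightarrow> (\<exists>C \<delta>. 0 < \<delta> \<and> (\<forall>s. \<bar>s\<bar> < \<delta> \<longrightarrow> norm (f s) \<le> C * \<bar>s\<bar> ^ m))"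

lemma bigO_at0I: "0 < \<delta> \<Longrightarrow> (\<And>s. \<bar>s\<bar> < \<delta> \<Longrightarrow> norm (f s) \<le> C * \<bar>s\<bar> ^ m) \<Longrightarrow> bigO_at0 m f"
  unfolding bigO_at0_def by blast

lemma bigO_at0E:
  assumes "bigO_at0 m f"
  obtains C \<delta> where "0 < \<delta>" "0 \<le> C" "\<And>s. \<bar>s\<bar> < \<delta> \<Longrightarrow> norm (f s) \<le> C * \<bar>s\<bar> ^ m"
proof -
  obtain C \<delta> where d: "0 < \<delta>" "\<And>s. \<bar>s\<bar> < \<delta> \<Longrightarrow> norm (f s) \<le> C * \<bar>s\<bar> ^ m"
    using assms unfolding bigO_at0_def by blast
  have "norm (f s) \<le> max C 0 * \<bar>s\<bar> ^ m" if "\<bar>s\<bar> < \<delta>" for s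
  proof -
    have "C * \<bar>s\<bar> ^ m \<le> max C 0 * \<bar>s\<bar> ^ m" by (intro mult_right_mono) auto
    then show ?thesis using d(2)[OF that] by linarith
  qed
  then show ?thesis using that[of \<delta> "max C 0"] d(1) by auto
qed

lemma bigO_at0_add: "bigO_at0 m f \<Longrightarrow> bigO_at0 m g \<Longrightarrow> bigO_at0 m (\<lambda>s. f s + g s)"
proof -
  assume "bigO_at0 m f" "bigO_at0 m g"
  then obtain C1 d1 C2 d2 where a: "0 < d1" "\<And>s. \<bar>s\<bar> < d1 \<Longrightarrow> norm (f s) \<le> C1 * \<bar>s\<bar> ^ m"
    and b: "0 < d2" "\<And>s. \<bar>s\<bar> < d2 \<Longrightarrow> norm (g s) \<le> C2 * \<bar>s\<bar> ^ m" by (metis bigO_at0E)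
  show ?thesis
  proof (rule bigO_at0I[of "min d1 d2" _ "C1 + C2"])
    fix s assume "\<bar>s\<bar> < min d1 d2"
    then show "norm (f s + g s) \<le> (C1 + C2) * \<bar>s\<bar> ^ m"
      using a(2)[of s] b(2)[of s] norm_triangle_ineq[of "f s" "g s"] by (simp add: distrib_right)
  qed (use a b in auto)
qed

lemma bigO_at0_cscale: "bigO_at0 m f \<Longrightarrow> bigO_at0 m (\<lambda>s. c *\<^sub>R f s)"
proof -
  assume "bigO_at0 m f"
  then obtain C d where a: "0 < d" "0 \<le> C" "\<And>s. \<bar>s\<bar> < d \<Longrightarrow> norm (f s) \<le> C * \<bar>s\<bar> ^ m" by (metis bigO_at0E)
  show ?thesis
  proof (rule bigO_at0I[of d _ "\<bar>c\<bar> * C"])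
    fix s assume "\<bar>s\<bar> < d"
    then show "norm (c *\<^sub>R f s) \<le> (\<bar>c\<bar> * C) * \<bar>s\<bar> ^ m"
      using a(3)[of s] by (simp add: mult.assoc mult_left_mono)
  qed (use a in auto)
qed

lemma bigO_at0_uminus: "bigO_at0 m f \<Longrightarrow> bigO_at0 m (\<lambda>s. - f s)"
  using bigO_at0_cscale[of m f "-1"] by simp

lemma bigO_at0_diff: "bigO_at0 m f \<Longrightarrow> bigO_at0 m g \<Longrightarrow> bigO_at0 m (\<lambda>s. f s - g s)"
  using bigO_at0_add[of m f "\<lambda>s. - g s"] bigO_at0_uminus by fastforce

lemma bigO_at0_scaleR:
  fixes f :: "real \<Rightarrow> real"
  shows "bigO_at0 a f \<Longrightarrow> bigO_at0 b g \<Longrightarrow> bigO_at0 (a + b) (\<lambda>s. f s *\<^sub>R g s)"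
proof -
  assume "bigO_at0 a f" "bigO_at0 b g"
  then obtain C1 d1 C2 d2 where x: "0 < d1" "0 \<le> C1" "\<And>s. \<bar>s\<bar> < d1 \<Longrightarrow> norm (f s) \<le> C1 * \<bar>s\<bar> ^ a"
    and y: "0 < d2" "0 \<le> C2" "\<And>s. \<bar>s\<bar> < d2 \<Longrightarrow> norm (g s) \<le> C2 * \<bar>s\<bar> ^ b" by (metis bigO_at0E)
  show ?thesis
  proof (rule bigO_at0I[of "min d1 d2" _ "C1 * C2"])
    fix s assume "\<bar>s\<bar> < min d1 d2"
    then have "\<bar>f s\<bar> * norm (g s) \<le> (C1 * \<bar>s\<bar> ^ a) * (C2 * \<bar>s\<bar> ^ b)"
      using x(3)[of s] y(3)[of s] y(2) by (intro mult_mono) auto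
    then show "norm (f s *\<^sub>R g s) \<le> (C1 * C2) * \<bar>s\<bar> ^ (a + b)"
      by (simp add: power_add mult_ac)
  qed (use x y in auto)
qed

lemma bigO_at0_mult:
  fixes f g :: "real \<Rightarrow> real"
  shows "bigO_at0 a f \<Longrightarrow> bigO_at0 b g \<Longrightarrow> bigO_at0 (a + b) (\<lambda>s. f s * g s)"
  using bigO_at0_scaleR[of a f b g] by simp

lemma bigO_at0_mono: "m \<le> k \<Longrightarrow> bigO_at0 k f \<Longrightarrow> bigO_at0 m f"
proof -
  assume mk: "m \<le> k" "bigO_at0 k f"
  then obtain C d where a: "0 < d" "0 \<le> C" "\<And>s. \<bar>s\<bar> < d \<Longrightarrow> norm (f s) \<le> C * \<bar>s\<bar> ^ k" by (metis bigO_at0E)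
  show ?thesis
  proof (rule bigO_at0I[of "min d 1" _ C])
    fix s assume s: "\<bar>s\<bar> < min d 1"
    have "\<bar>s\<bar> ^ k \<le> \<bar>s\<bar> ^ m" using s mk(1) by (intro power_decreasing) auto
    then show "norm (f s) \<le> C * \<bar>s\<bar> ^ m" using a(3)[of s] s a(2)
      by (meson min_less_iff_conj mult_left_mono order_trans)
  qed (use a in auto)
qed

lemma bigO_at0_zero: "bigO_at0 m (\<lambda>s. 0)"
  by (rule bigO_at0I[of 1 _ 0]) auto

lemma bigO_at0_monom: "m \<le> j \<Longrightarrow> bigO_at0 m (\<lambda>s. s ^ j *\<^sub>R a)"
proof -
  assume "m \<le> j"
  have "bigO_at0 j (\<lambda>s. s ^ j *\<^sub>R a)"
    by (rule bigO_at0I[of 1 _ "norm a"]) (auto simp: power_abs mult.commute)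
  then show ?thesis using bigO_at0_mono \<open>m \<le> j\<close> by blast
qed

lemma bigO_at0_monom_real: "m \<le> j \<Longrightarrow> bigO_at0 m (\<lambda>s::real. c * s ^ j)"
  using bigO_at0_monom[of m j c] by (simp add: mult.commute)

lemma bigO_at0_cong: "0 < \<delta> \<Longrightarrow> (\<And>s. \<bar>s\<bar> < \<delta> \<Longrightarrow> f s = g s) \<Longrightarrow> bigO_at0 m f \<Longrightarrow> bigO_at0 m g"
proof -
  assume d: "0 < \<delta>" "\<And>s. \<bar>s\<bar> < \<delta> \<Longrightarrow> f s = g s" "bigO_at0 m f"
  then obtain C e where a: "0 < e" "\<And>s. \<bar>s\<bar> < e \<Longrightarrow> norm (f s) \<le> C * \<bar>s\<bar> ^ m" by (metis bigO_at0E)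
  show ?thesis by (rule bigO_at0I[of "min e \<delta>" _ C]) (use a d in \<open>auto simp: d(2)[symmetric]\<close>)
qed

lemma bigO_at0_comp: "bigO_at0 m f \<Longrightarrow> bigO_at0 1 \<phi> \<Longrightarrow> bigO_at0 m (\<lambda>s. f (\<phi> s))"
proof -
  assume "bigO_at0 m f" "bigO_at0 1 \<phi>"
  then obtain C d K e where a: "0 < d" "0 \<le> C" "\<And>s. \<bar>s\<bar> < d \<Longrightarrow> norm (f s) \<le> C * \<bar>s\<bar> ^ m"
    and b: "0 < e" "0 \<le> K" "\<And>s. \<bar>s\<bar> < e \<Longrightarrow> norm (\<phi> s) \<le> K * \<bar>s\<bar> ^ 1" by (metis bigO_at0E)
  show ?thesis
  proof (rule bigO_at0I[of "min e (d / (K + 1))" _ "C * K ^ m"])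
    fix s assume s: "\<bar>s\<bar> < min e (d / (K + 1))"
    have p: "\<bar>\<phi> s\<bar> \<le> K * \<bar>s\<bar>" using b(3)[of s] s by simp
    have "(K + 1) * \<bar>s\<bar> < d" using s b(2) by (simp add: field_simps)
    moreover have "K * \<bar>s\<bar> \<le> (K + 1) * \<bar>s\<bar>" by (intro mult_right_mono) auto
    ultimately have "\<bar>\<phi> s\<bar> < d" using p by linarith
    then have "norm (f (\<phi> s)) \<le> C * \<bar>\<phi> s\<bar> ^ m" using a(3) by blast
    also have "\<dots> \<le> C * (K * \<bar>s\<bar>) ^ m" using p a(2) by (intro mult_left_mono power_mono) auto
    finally show "norm (f (\<phi> s)) \<le> (C * K ^ m) * \<bar>s\<bar> ^ m" by (simp add: power_mult_distrib mult_ac)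
  qed (use a b in auto)
qed

lemma bigO_at0_fst: "bigO_at0 m f \<Longrightarrow> bigO_at0 m (\<lambda>s. fst (f s))"
proof -
  assume "bigO_at0 m f"
  then obtain C d where a: "0 < d" "\<And>s. \<bar>s\<bar> < d \<Longrightarrow> norm (f s) \<le> C * \<bar>s\<bar> ^ m" by (metis bigO_at0E)
  show ?thesis
  proof (rule bigO_at0I[of d _ C])
    fix s assume "\<bar>s\<bar> < d"
    moreover have "norm (fst (f s)) \<le> norm (f s)" using norm_fst_le[of "fst (f s)" "snd (f s)"] by simp
    ultimately show "norm (fst (f s)) \<le> C * \<bar>s\<bar> ^ m" using a(2)[of s] by linarith
  qed (use a in auto)
qed

lemma bigO_at0_snd: "bigO_at0 m f \<Longrightarrow> bigO_at0 m (\<lambda>s. snd (f s))"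
proof -
  assume "bigO_at0 m f"
  then obtain C d where a: "0 < d" "\<And>s. \<bar>s\<bar> < d \<Longrightarrow> norm (f s) \<le> C * \<bar>s\<bar> ^ m" by (metis bigO_at0E)
  show ?thesis
  proof (rule bigO_at0I[of d _ C])
    fix s assume "\<bar>s\<bar> < d"
    moreover have "norm (snd (f s)) \<le> norm (f s)" using norm_snd_le[of "snd (f s)" "fst (f s)"] by simp
    ultimately show "norm (snd (f s)) \<le> C * \<bar>s\<bar> ^ m" using a(2)[of s] by linarith
  qed (use a in auto)
qed

lemma norm_Pair_le_add:
  fixes a :: "'a::real_normed_vector" and b :: "'b::real_normed_vector"
  shows "norm (a, b) \<le> norm a + norm b"
  unfolding norm_Pair by (rule sqrt_sum_squares_le_sum) auto

lemma bigO_at0_Pair: "bigO_at0 m f \<Longrightarrow> bigO_at0 m g \<Longrightarrow> bigO_at0 m (\<lambda>s. (f s, g s))"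
proof -
  assume "bigO_at0 m f" "bigO_at0 m g"
  then obtain C1 d1 C2 d2 where a: "0 < d1" "\<And>s. \<bar>s\<bar> < d1 \<Longrightarrow> norm (f s) \<le> C1 * \<bar>s\<bar> ^ m"
    and b: "0 < d2" "\<And>s. \<bar>s\<bar> < d2 \<Longrightarrow> norm (g s) \<le> C2 * \<bar>s\<bar> ^ m" by (metis bigO_at0E)
  show ?thesis
  proof (rule bigO_at0I[of "min d1 d2" _ "C1 + C2"])
    fix s assume "\<bar>s\<bar> < min d1 d2"
    then show "norm (f s, g s) \<le> (C1 + C2) * \<bar>s\<bar> ^ m"
      using a(2)[of s] b(2)[of s] norm_Pair_le_add[of "f s" "g s"] by (simp add: distrib_right)
  qed (use a b in auto)
qed

lemma bigO_at0_bounded_linear: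
  assumes "bounded_linear D" "bigO_at0 m f"
  shows "bigO_at0 m (\<lambda>t. D (f t))"
proof -
  obtain K where K: "0 < K" "\<And>x. norm (D x) \<le> norm x * K"
    using bounded_linear.pos_bounded[OF assms(1)] by blast
  obtain C \<delta> where C: "0 < \<delta>" "\<And>s. \<bar>s\<bar> < \<delta> \<Longrightarrow> norm (f s) \<le> C * \<bar>s\<bar> ^ m"
    using assms(2) by (metis bigO_at0E)
  show ?thesis
  proof (rule bigO_at0I[OF C(1)])
    fix s assume "\<bar>s\<bar> < \<delta>"
    then have "norm (f s) * K \<le> C * \<bar>s\<bar> ^ m * K" using C(2) K(1) by (simp add: mult_right_mono)
    then show "norm (D (f s)) \<le> (C * K) * \<bar>s\<bar> ^ m" using K(2)[of "f s"] by (simp add: mult_ac)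
  qed
qed

lemma bigO_at0_0_of_isCont: "isCont f 0 \<Longrightarrow> bigO_at0 0 f"
proof -
  assume "isCont f 0"
  then obtain d where d: "0 < d" "\<And>s. dist s 0 < d \<Longrightarrow> dist (f s) (f 0) < 1"
    unfolding continuous_at_eps_delta by (meson zero_less_one)
  show ?thesis
  proof (rule bigO_at0I[of d _ "norm (f 0) + 1"])
    fix s assume "\<bar>s\<bar> < d"
    then have "norm (f s - f 0) < 1" using d(2)[of s] by (simp add: dist_norm)
    then show "norm (f s) \<le> (norm (f 0) + 1) * \<bar>s\<bar> ^ 0"
      using norm_triangle_ineq2[of "f s" "f 0"] by simp
  qed (use d in auto)
qed

lemma bigO_at0_Suc_imp_zero: "bigO_at0 (Suc m) f \<Longrightarrow> f 0 = 0"
proof -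
  assume "bigO_at0 (Suc m) f"
  then obtain C d where "0 < d" "\<And>s. \<bar>s\<bar> < d \<Longrightarrow> norm (f s) \<le> C * \<bar>s\<bar> ^ Suc m" by (metis bigO_at0E)
  then have "norm (f 0) \<le> 0" by (metis abs_zero mult_zero_right power_0_Suc mult_zero_left)
  then show ?thesis by simp
qed

lemma bigO_at0_polynomial_coeffs_zero:
  fixes a :: "nat \<Rightarrow> 'b::real_normed_vector"
  assumes O: "bigO_at0 (Suc m) (\<lambda>t. \<Sum>k\<le>m. t ^ k *\<^sub>R a k)"
  shows "k \<le> m \<Longrightarrow> a k = 0"
proof (induction k rule: less_induct)
  case (less k)
  then have z: "\<And>j. j < k \<Longrightarrow> a j = 0" by simp
  define P where "P t = (\<Sum>j\<in>{k..m}. t ^ (j - k) *\<^sub>R a j)" for t :: real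
  have split: "{..m} = {..<k} \<union> {k..m}" using less.prems by auto
  have eq: "(\<Sum>j\<le>m. t ^ j *\<^sub>R a j) = t ^ k *\<^sub>R P t" for t
  proof -
    have "(\<Sum>j\<le>m. t ^ j *\<^sub>R a j) = (\<Sum>j\<in>{k..m}. t ^ j *\<^sub>R a j)"
      unfolding split by (subst sum.union_disjoint) (auto simp: z)
    also have "\<dots> = (\<Sum>j\<in>{k..m}. t ^ k *\<^sub>R (t ^ (j - k) *\<^sub>R a j))"
      by (rule sum.cong) (auto simp: power_add[symmetric])
    finally show ?thesis by (simp add: P_def scaleR_sum_right)
  qed
  have P0: "P 0 = a k"
  proof -
    have "{k..m} = insert k {Suc k..m}" using less.prems by auto
    then show ?thesis by (simp add: P_def power_0_left)
  qed
  have contP: "isCont P 0" unfolding P_def by (intro continuous_intros)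
  then have t1: "(P \<longlongrightarrow> a k) (at 0)" using P0 isCont_def by metis
  from O obtain C d where Cd: "0 < d" "\<And>s. \<bar>s\<bar> < d \<Longrightarrow> norm (\<Sum>j\<le>m. s ^ j *\<^sub>R a j) \<le> C * \<bar>s\<bar> ^ Suc m"
    unfolding bigO_at0_def by blast
  have ev: "\<forall>\<^sub>F t in at 0. norm (P t) \<le> C * \<bar>t\<bar> ^ (Suc m - k)"
  proof -
    have "norm (P t) \<le> C * \<bar>t\<bar> ^ (Suc m - k)" if "t \<noteq> 0" "\<bar>t\<bar> < d" for t
    proof -
      have "\<bar>t\<bar> ^ k * norm (P t) \<le> C * \<bar>t\<bar> ^ Suc m" using Cd(2)[OF that(2)] eq[of t] by (simp add: power_abs)
      also have "\<dots> = \<bar>t\<bar> ^ k * (C * \<bar>t\<bar> ^ (Suc m - k))"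
        using less.prems by (simp add: power_add[symmetric] mult_ac)
      finally show ?thesis using that(1) by (simp add: mult_le_cancel_left_pos)
    qed
    then show ?thesis unfolding eventually_at using Cd(1) by (auto simp: dist_norm)
  qed
  have lim0: "((\<lambda>t. C * \<bar>t\<bar> ^ (Suc m - k)) \<longlongrightarrow> 0) (at (0::real))"
  proof -
    have "isCont (\<lambda>t::real. C * \<bar>t\<bar> ^ (Suc m - k)) 0" by (intro continuous_intros)
    moreover have "Suc m - k > 0" using less.prems by simp
    ultimately show ?thesis unfolding isCont_def by (simp add: power_0_left)
  qed
  have "(P \<longlongrightarrow> 0) (at 0)" by (rule Lim_null_comparison[OF ev lim0])
  then show ?case using t1 tendsto_unique[OF at_neq_bot] by metis
qed

lemma bigO_at0_antiderivative:
  fixes g :: "real \<Rightarrow> 'b::real_normed_vector"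
  assumes "open S" "0 \<in> S" "\<And>x. x \<in> S \<Longrightarrow> (g has_vector_derivative g' x) (at x)" "bigO_at0 m g'"
  shows "bigO_at0 (Suc m) (\<lambda>t. g t - g 0)"
proof -
  obtain C d where Cd: "0 < d" "0 \<le> C" "\<And>s. \<bar>s\<bar> < d \<Longrightarrow> norm (g' s) \<le> C * \<bar>s\<bar> ^ m"
    using assms(4) by (metis bigO_at0E)
  obtain e where e: "0 < e" "ball 0 e \<subseteq> S" using assms(1,2) open_contains_ball by blast
  show ?thesis
  proof (rule bigO_at0I[of "min d e" _ C])
    fix t :: real assume t: "\<bar>t\<bar> < min d e"
    let ?K = "{-\<bar>t\<bar>..\<bar>t\<bar>}"
    have inS: "x \<in> S" if "x \<in> ?K" for x using that t e(2) by (auto simp: dist_norm)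
    have der: "(g has_derivative (\<lambda>h. h *\<^sub>R g' x)) (at x within ?K)" if "x \<in> ?K" for x
      using assms(3)[OF inS[OF that]] unfolding has_vector_derivative_def
      by (rule has_derivative_at_withinI)
    have bd: "onorm (\<lambda>h. h *\<^sub>R g' x) \<le> C * \<bar>t\<bar> ^ m" if "x \<in> ?K" for x
    proof (rule onorm_le)
      fix h :: real
      have "\<bar>x\<bar> < d" using that t by auto
      then have "norm (g' x) \<le> C * \<bar>x\<bar> ^ m" using Cd(3) by blast
      also have "\<dots> \<le> C * \<bar>t\<bar> ^ m" using that Cd(2) by (intro mult_left_mono power_mono) auto
      finally show "norm (h *\<^sub>R g' x) \<le> C * \<bar>t\<bar> ^ m * norm h"
        by (simp add: mult_left_mono mult.commute)
    qed
    have "norm (g t - g 0) \<le> C * \<bar>t\<bar> ^ m * norm (t - 0)"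
      by (rule differentiable_bound[OF convex_real_interval(5) der bd]) auto
    then show "norm (g t - g 0) \<le> C * \<bar>t\<bar> ^ Suc m" by (simp add: mult_ac)
  qed (use Cd e in auto)
qed

lemma taylor_polynomial_has_vector_derivative:
  "((\<lambda>t. \<Sum>k\<le>Suc m. (t ^ k / fact k) *\<^sub>R c k) has_vector_derivative
      (\<Sum>k\<le>m. (t ^ k / fact k) *\<^sub>R c (Suc k))) (at t)"
proof (induction m)
  case 0
  show ?case by (auto intro!: derivative_eq_intros)
next
  case (Suc m)
  have d: "((\<lambda>t. (t ^ Suc (Suc m) / fact (Suc (Suc m))) *\<^sub>R c (Suc (Suc m))) has_vector_derivative
        (t ^ Suc m / fact (Suc m)) *\<^sub>R c (Suc (Suc m))) (at t)"
  proof -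
    have r0: "((\<lambda>t. t ^ Suc (Suc m)) has_real_derivative real (Suc (Suc m)) * t ^ Suc m) (at t)"
      using DERIV_pow[of "Suc (Suc m)" t] by simp
    have e: "real (Suc (Suc m)) * t ^ Suc m / fact (Suc (Suc m)) = t ^ Suc m / fact (Suc m)"
    proof -
      have "real (Suc (Suc m)) * t ^ Suc m / fact (Suc (Suc m)) =
          real (Suc (Suc m)) * t ^ Suc m / (real (Suc (Suc m)) * fact (Suc m))"
        by (simp only: fact_Suc[of "Suc m"])
      also have "\<dots> = t ^ Suc m / fact (Suc m)"
        by (rule nonzero_mult_divide_mult_cancel_left) simp
      finally show ?thesis .
    qed
    have r: "((\<lambda>t. t ^ Suc (Suc m) / fact (Suc (Suc m))) has_real_derivative t ^ Suc m / fact (Suc m)) (at t)"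
      using DERIV_cdivide[OF r0, of "fact (Suc (Suc m))"] e by simp
    show ?thesis using has_vector_derivative_scaleR[OF r has_vector_derivative_const[of "c (Suc (Suc m))"]]
      by simp
  qed
  show ?case
    unfolding sum.atMost_Suc[of _ "Suc m"] sum.atMost_Suc[of _ m]
    using has_vector_derivative_add[OF Suc d] by (simp add: sum.atMost_Suc)
qed

definition derivative_tower :: "real set \<Rightarrow> (nat \<Rightarrow> real \<Rightarrow> 'b::real_normed_vector) \<Rightarrow> bool" where
  "derivative_tower S D \<longleftrightarrow> (\<forall>j. \<forall>x\<in>S. (D j has_vector_derivative D (Suc j) x) (at x))"

lemma taylor_bigO_at0_tower:
  fixes D :: "nat \<Rightarrow> real \<Rightarrow> 'b::real_normed_vector"
  assumes "open S" "0 \<in> S" "derivative_tower S D"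
  shows "bigO_at0 (Suc m) (\<lambda>t. D 0 t - (\<Sum>k\<le>m. (t ^ k / fact k) *\<^sub>R D k 0))"
  using assms(3)
proof (induction m arbitrary: D)
  case 0
  have "isCont (D 1) 0" using 0 assms(2) unfolding derivative_tower_def
    by (metis has_vector_derivative_continuous)
  then have "bigO_at0 0 (D 1)" by (rule bigO_at0_0_of_isCont)
  then have "bigO_at0 (Suc 0) (\<lambda>t. D 0 t - D 0 0)"
    using bigO_at0_antiderivative[OF assms(1,2), of "D 0" "D 1"] 0 unfolding derivative_tower_def by simp
  then show ?case by simp
next
  case (Suc m)
  have "derivative_tower S (\<lambda>j. D (Suc j))" using Suc.prems unfolding derivative_tower_def by simp
  then have IH: "bigO_at0 (Suc m) (\<lambda>t. D 1 t - (\<Sum>k\<le>m. (t ^ k / fact k) *\<^sub>R D (Suc k) 0))"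
    using Suc.IH by simp
  let ?g = "\<lambda>t. D 0 t - (\<Sum>k\<le>Suc m. (t ^ k / fact k) *\<^sub>R D k 0)"
  have gd: "(?g has_vector_derivative (D 1 t - (\<Sum>k\<le>m. (t ^ k / fact k) *\<^sub>R D (Suc k) 0))) (at t)"
    if "t \<in> S" for t
    using Suc.prems that taylor_polynomial_has_vector_derivative[where m=m and c="\<lambda>k. D k 0" and t=t] unfolding derivative_tower_def
    by (auto intro!: has_vector_derivative_diff)
  have g0: "?g 0 = 0"
    by (simp add: sum.atMost_shift zero_power)
  have "bigO_at0 (Suc (Suc m)) (\<lambda>t. ?g t - ?g 0)"
    by (rule bigO_at0_antiderivative[OF assms(1,2) gd IH])
  then show ?case using g0 by simp
qed

lemma derivative_tower_nth_deriv: assumes "open S" "curve_smooth_on S f" shows "derivative_tower S (\<lambda>j. nth_deriv j f)"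
  unfolding derivative_tower_def using curve_smooth_on_nth_deriv[OF assms] by auto


lemma taylor_bigO_at0:
  fixes f :: "real \<Rightarrow> 'b::real_normed_vector"
  assumes "smooth_near0 f"
  shows "bigO_at0 (Suc m) (\<lambda>t. f t - (\<Sum>k\<le>m. (t ^ k / fact k) *\<^sub>R nth_deriv k f 0))"
proof -
  obtain S where S: "open S" "0 \<in> S" "curve_smooth_on S f" using assms unfolding smooth_near0_def by blast
  show ?thesis using taylor_bigO_at0_tower[OF S(1,2) derivative_tower_nth_deriv[OF S(1,3)], of m] by simp
qed

lemma nth_deriv_of_expansion:
  fixes f :: "real \<Rightarrow> 'b::real_normed_vector"
  assumes "smooth_near0 f"
    and O: "bigO_at0 (Suc m) (\<lambda>t. f t - (\<Sum>k\<le>m. t ^ k *\<^sub>R c k))"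
    and "k \<le> m"
  shows "nth_deriv k f 0 = fact k *\<^sub>R c k"
proof -
  have "bigO_at0 (Suc m) (\<lambda>t. (f t - (\<Sum>k\<le>m. t ^ k *\<^sub>R c k)) -
          (f t - (\<Sum>k\<le>m. (t ^ k / fact k) *\<^sub>R nth_deriv k f 0)))"
    by (rule bigO_at0_diff[OF O taylor_bigO_at0[OF assms(1)]])
  moreover have "(f t - (\<Sum>k\<le>m. t ^ k *\<^sub>R c k)) -
          (f t - (\<Sum>k\<le>m. (t ^ k / fact k) *\<^sub>R nth_deriv k f 0)) =
        (\<Sum>k\<le>m. t ^ k *\<^sub>R ((1 / fact k) *\<^sub>R nth_deriv k f 0 - c k))" for t
    by (simp add: sum_subtractf scaleR_diff_right)
  ultimately have "bigO_at0 (Suc m) (\<lambda>t. \<Sum>k\<le>m. t ^ k *\<^sub>R ((1 / fact k) *\<^sub>R nth_deriv k f 0 - c k))"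
    by simp
  from bigO_at0_polynomial_coeffs_zero[OF this assms(3)]
  have "(1 / fact k) *\<^sub>R nth_deriv k f 0 = c k" by simp
  then have "fact k *\<^sub>R ((1 / fact k) *\<^sub>R nth_deriv k f 0) = fact k *\<^sub>R c k" by (rule arg_cong)
  then show ?thesis by simp
qed

lemma nth_deriv_zero_of_bigO_at0:
  fixes f :: "real \<Rightarrow> 'b::real_normed_vector"
  assumes "smooth_near0 f" "bigO_at0 m f" "k < m"
  shows "nth_deriv k f 0 = 0"
proof -
  obtain m' where m: "m = Suc m'" using assms(3) by (cases m) auto
  have "bigO_at0 (Suc m') (\<lambda>t. f t - (\<Sum>k\<le>m'. t ^ k *\<^sub>R (0::'b)))" using assms(2) m by simp
  from nth_deriv_of_expansion[OF assms(1) this, of k] show ?thesis using assms(3) m by simp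
qed

lemma bigO_at0_of_nth_deriv_zero:
  fixes f :: "real \<Rightarrow> 'b::real_normed_vector"
  assumes "smooth_near0 f" "\<And>k. k < m \<Longrightarrow> nth_deriv k f 0 = 0"
  shows "bigO_at0 m f"
proof (cases m)
  case 0
  have "bigO_at0 (Suc 0) (\<lambda>t. f t - f 0)" using taylor_bigO_at0[OF assms(1), of 0] by simp
  then have "bigO_at0 0 (\<lambda>t. (f t - f 0) + f 0)"
    by (intro bigO_at0_add bigO_at0_mono[of 0 "Suc 0"] bigO_at0_0_of_isCont) auto
  then show ?thesis using 0 by simp
next
  case (Suc m')
  have "(\<Sum>k\<le>m'. (t ^ k / fact k) *\<^sub>R nth_deriv k f 0) = 0" for t
    using assms(2) Suc by (intro sum.neutral) auto
  then show ?thesis using taylor_bigO_at0[OF assms(1), of m'] Suc by simp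
qed

lemma bigO_at0_next_term:
  fixes f :: "real \<Rightarrow> 'b::real_normed_vector"
  assumes "smooth_near0 f" "bigO_at0 m f"
  obtains a where "bigO_at0 (Suc m) (\<lambda>t. f t - t ^ m *\<^sub>R a)"
proof -
  have "(\<Sum>k<m. (t ^ k / fact k) *\<^sub>R nth_deriv k f 0) = 0" for t
    using nth_deriv_zero_of_bigO_at0[OF assms] by (intro sum.neutral) auto
  then have "(\<Sum>k\<le>m. (t ^ k / fact k) *\<^sub>R nth_deriv k f 0) = t ^ m *\<^sub>R ((1 / fact m) *\<^sub>R nth_deriv m f 0)"
    for t by (simp add: lessThan_Suc_atMost[symmetric])
  then have "bigO_at0 (Suc m) (\<lambda>t. f t - t ^ m *\<^sub>R ((1 / fact m) *\<^sub>R nth_deriv m f 0))"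
    using taylor_bigO_at0[OF assms(1), of m] by simp
  then show ?thesis by (rule that)
qed

lemma sum_two_monomials:
  fixes A B :: "'b::real_normed_vector"
  assumes "p \<le> N" "q \<le> N" "p \<noteq> q"
  shows "(\<Sum>k\<le>N. t ^ k *\<^sub>R (if k = p then A else if k = q then B else 0)) = t ^ p *\<^sub>R A + t ^ q *\<^sub>R B"
proof -
  have "(\<Sum>k\<le>N. t ^ k *\<^sub>R (if k = p then A else if k = q then B else 0)) =
        (\<Sum>k\<le>N. (if k = p then t ^ p *\<^sub>R A else 0) + (if k = q then t ^ q *\<^sub>R B else 0))"
    using assms(3) by (intro sum.cong) auto
  also have "\<dots> = t ^ p *\<^sub>R A + t ^ q *\<^sub>R B"
    using assms by (simp add: sum.distrib)
  finally show ?thesis .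
qed

lemma nth_deriv_of_two_term_expansion:
  fixes f :: "real \<Rightarrow> 'b::real_normed_vector"
  assumes "smooth_near0 f"
    and O: "bigO_at0 (m + 2) (\<lambda>t. f t - (t ^ m *\<^sub>R A + t ^ (m + 1) *\<^sub>R B))"
  shows "(\<forall>k<m. nth_deriv k f 0 = 0) \<and> nth_deriv m f 0 = fact m *\<^sub>R A \<and>
         nth_deriv (m + 1) f 0 = fact (m + 1) *\<^sub>R B"
proof -
  define c where "c k = (if k = m then A else if k = m + 1 then B else 0)" for k
  have "(\<Sum>k\<le>m + 1. t ^ k *\<^sub>R c k) = t ^ m *\<^sub>R A + t ^ (m + 1) *\<^sub>R B" for t
    unfolding c_def by (rule sum_two_monomials) auto
  then have O': "bigO_at0 (Suc (m + 1)) (\<lambda>t. f t - (\<Sum>k\<le>m + 1. t ^ k *\<^sub>R c k))" using O by simp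
  have "nth_deriv k f 0 = fact k *\<^sub>R c k" if "k \<le> m + 1" for k
    by (rule nth_deriv_of_expansion[OF assms(1) O' that])
  then show ?thesis unfolding c_def by auto
qed

lemma two_term_expansion_derivative:
  fixes f :: "real \<Rightarrow> 'b::real_normed_vector"
  assumes "smooth_near0 f" and m: "m = Suc m'"
    and O: "bigO_at0 (m + 2) (\<lambda>t. f t - (t ^ m *\<^sub>R A + t ^ (m + 1) *\<^sub>R B))"
  shows "bigO_at0 (m + 1) (\<lambda>t. nth_deriv 1 f t - (t ^ m' *\<^sub>R (real m *\<^sub>R A) + t ^ m *\<^sub>R (real (m + 1) *\<^sub>R B)))"
proof -
  have co: "(\<forall>k<m. nth_deriv k f 0 = 0) \<and> nth_deriv m f 0 = fact m *\<^sub>R A \<and>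
         nth_deriv (m + 1) f 0 = fact (m + 1) *\<^sub>R B" by (rule nth_deriv_of_two_term_expansion[OF assms(1) O])
  have taylor: "(\<Sum>k\<le>m. (t ^ k / fact k) *\<^sub>R nth_deriv (Suc k) f 0) =
      t ^ m' *\<^sub>R (real m *\<^sub>R A) + t ^ m *\<^sub>R (real (m + 1) *\<^sub>R B)" for t
  proof -
    have "(\<Sum>k<m'. (t ^ k / fact k) *\<^sub>R nth_deriv (Suc k) f 0) = 0"
      using co m by (intro sum.neutral) auto
    moreover have "(t ^ m' / fact m') *\<^sub>R nth_deriv (Suc m') f 0 = t ^ m' *\<^sub>R (real m *\<^sub>R A)"
      using co by (simp add: m fact_Suc)
    moreover have "(t ^ m / fact m) *\<^sub>R nth_deriv (Suc m) f 0 = t ^ m *\<^sub>R (real (m + 1) *\<^sub>R B)"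
      using co by (simp add: fact_Suc del: of_nat_Suc)
    ultimately show ?thesis
      by (simp only: m sum.atMost_Suc lessThan_Suc_atMost[symmetric] sum.lessThan_Suc) simp
  qed
  have "bigO_at0 (Suc m) (\<lambda>t. nth_deriv 1 f t - (\<Sum>k\<le>m. (t ^ k / fact k) *\<^sub>R nth_deriv k (nth_deriv 1 f) 0))"
    by (rule taylor_bigO_at0[OF smooth_near0_nth_deriv[OF assms(1)]])
  then show ?thesis unfolding nth_deriv_Suc_right[symmetric] taylor by simp
qed

section \<open>Maps of the plane\<close>

lemma linear_plane_decompose:
  fixes D :: "real \<times> real \<Rightarrow> 'c::real_vector"
  assumes "linear D"
  shows "D v = fst v *\<^sub>R D (1, 0) + snd v *\<^sub>R D (0, 1)"
proof -
  have "v = fst v *\<^sub>R (1, 0) + snd v *\<^sub>R (0, 1)" by (simp add: prod_eq_iff)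
  then have "D v = D (fst v *\<^sub>R (1, 0) + snd v *\<^sub>R (0, 1))" by metis
  also have "\<dots> = fst v *\<^sub>R D (1, 0) + snd v *\<^sub>R D (0, 1)"
    by (simp only: linear_add[OF assms] linear_scale[OF assms])
  finally show ?thesis .
qed

lemma has_vector_derivative_plane_chain:
  fixes G :: "real \<times> real \<Rightarrow> 'c::real_normed_vector"
  assumes "G differentiable (at (F t))" "(F has_vector_derivative F') (at t)"
  shows "((\<lambda>t. G (F t)) has_vector_derivative frechet_derivative G (at (F t)) F') (at t)"
proof -
  let ?D = "frechet_derivative G (at (F t))"
  have "(G has_derivative ?D) (at (F t))" using assms(1) frechet_derivative_works by blast
  moreover have "(F has_derivative (\<lambda>h. h *\<^sub>R F')) (at t)" using assms(2) has_vector_derivative_def by blast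
  ultimately have "((G \<circ> F) has_derivative (?D \<circ> (\<lambda>h. h *\<^sub>R F'))) (at t)" by (rule diff_chain_at[rotated])
  moreover have "?D \<circ> (\<lambda>h. h *\<^sub>R F') = (\<lambda>h. h *\<^sub>R ?D F')"
    using linear_scale[OF linear_frechet_derivative[OF assms(1)]] by (simp add: o_def)
  ultimately show ?thesis unfolding has_vector_derivative_def by (simp add: o_def)
qed

lemma curve_Ck_on_compose_plane:
  fixes G :: "real \<times> real \<Rightarrow> 'c::real_normed_vector"
  shows "Ck_on k V G \<Longrightarrow> curve_Ck_on k S F \<Longrightarrow> F ` S \<subseteq> V \<Longrightarrow> curve_Ck_on k S (\<lambda>t. G (F t))"
proof (induction k arbitrary: G F)
  case 0 then show ?case using continuous_on_compose2 by (metis curve_Ck_on.simps(1) Ck_on.simps(1))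
next
  case (Suc k)
  let ?D = "\<lambda>t. frechet_derivative G (at (F t))"
  have Gd: "\<forall>x\<in>V. G differentiable (at x)" and Gk: "\<And>v. Ck_on k V (\<lambda>x. frechet_derivative G (at x) v)"
    using Suc.prems(1) by auto
  obtain F' where Fd: "\<forall>x\<in>S. (F has_vector_derivative F' x) (at x)" and F'k: "curve_Ck_on k S F'"
    using Suc.prems(2) by auto
  have Fk: "curve_Ck_on k S F" using Suc.prems(2) curve_Ck_on_Suc_imp by blast
  have "((\<lambda>t. G (F t)) has_vector_derivative (fst (F' t) *\<^sub>R ?D t (1, 0) + snd (F' t) *\<^sub>R ?D t (0, 1))) (at t)"
    if "t \<in> S" for t
  proof -
    have G: "G differentiable (at (F t))" using Gd Suc.prems(3) that by blast
    have "?D t (F' t) = fst (F' t) *\<^sub>R ?D t (1, 0) + snd (F' t) *\<^sub>R ?D t (0, 1)"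
      by (rule linear_plane_decompose[OF linear_frechet_derivative[OF G]])
    then show ?thesis using has_vector_derivative_plane_chain[of G F t "F' t"] G Fd that by metis
  qed
  moreover have "curve_Ck_on k S (\<lambda>t. fst (F' t) *\<^sub>R ?D t (1, 0) + snd (F' t) *\<^sub>R ?D t (0, 1))"
    using Suc.IH[OF Gk Fk Suc.prems(3)] F'k
    by (intro curve_Ck_on_add curve_Ck_on_scaleR curve_Ck_on_fst curve_Ck_on_snd) auto
  ultimately show ?case unfolding curve_Ck_on.simps
    by (intro exI[of _ "\<lambda>t. fst (F' t) *\<^sub>R ?D t (1, 0) + snd (F' t) *\<^sub>R ?D t (0, 1)"]) simp
qed

lemma curve_smooth_on_compose_plane:
  fixes G :: "real \<times> real \<Rightarrow> 'c::real_normed_vector"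
  assumes "smooth_on V G" "curve_smooth_on S F" "F ` S \<subseteq> V"
  shows "curve_smooth_on S (\<lambda>t. G (F t))"
  using assms curve_Ck_on_compose_plane unfolding smooth_on_def curve_smooth_on_def by blast

lemma smooth_on_frechet_derivative:
  assumes "smooth_on V G"
  shows "\<forall>x\<in>V. G differentiable (at x)" "smooth_on V (\<lambda>x. frechet_derivative G (at x) v)"
proof -
  have "Ck_on (Suc k) V G" for k using assms unfolding smooth_on_def by blast
  then show "\<forall>x\<in>V. G differentiable (at x)" "smooth_on V (\<lambda>x. frechet_derivative G (at x) v)"
    unfolding smooth_on_def by simp_all
qed

lemma Ck_on_const: "Ck_on k S (\<lambda>x. c)"
proof (induction k arbitrary: c)
  case 0 then show ?case by simp
next
  case (Suc k)
  have "frechet_derivative (\<lambda>x. c) (at x) = (\<lambda>h. 0)" for x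
    by (rule frechet_derivative_at[symmetric]) (rule has_derivative_const)
  then show ?case using Suc by simp
qed

definition affine2 :: "real \<Rightarrow> real \<Rightarrow> real \<Rightarrow> real \<Rightarrow> real \<Rightarrow> real \<Rightarrow> real \<times> real \<Rightarrow> real \<times> real" where
  "affine2 a1 b1 c1 a2 b2 c2 z = (a1 * fst z + b1 * snd z + c1, a2 * fst z + b2 * snd z + c2)"

lemma affine2_has_derivative:
  "(affine2 a1 b1 c1 a2 b2 c2 has_derivative (\<lambda>h. (a1 * fst h + b1 * snd h, a2 * fst h + b2 * snd h))) (at x)"
  unfolding affine2_def by (auto intro!: derivative_eq_intros)

lemma smooth_on_affine2: "smooth_on S (affine2 a1 b1 c1 a2 b2 c2)"
  unfolding smooth_on_def
proof
  fix k show "Ck_on k S (affine2 a1 b1 c1 a2 b2 c2)"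
  proof (cases k)
    case 0
    have "continuous_on S (affine2 a1 b1 c1 a2 b2 c2)" unfolding affine2_def by (intro continuous_intros)
    then show ?thesis using 0 by simp
  next
    case (Suc m)
    have "frechet_derivative (affine2 a1 b1 c1 a2 b2 c2) (at x) =
        (\<lambda>h. (a1 * fst h + b1 * snd h, a2 * fst h + b2 * snd h))" for x
      using frechet_derivative_at[OF affine2_has_derivative] by simp
    moreover have "\<forall>x\<in>S. affine2 a1 b1 c1 a2 b2 c2 differentiable (at x)"
      using affine2_has_derivative differentiable_def by blast
    ultimately show ?thesis using Suc by (simp add: Ck_on_const)
  qed
qed

lemma local_diffeo_at_affine2:
  assumes "a1 * b2 - b1 * a2 \<noteq> 0"
  obtains G where "local_diffeo_at p (affine2 a1 b1 c1 a2 b2 c2) G"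
proof -
  define D where "D = a1 * b2 - b1 * a2"
  let ?F = "affine2 a1 b1 c1 a2 b2 c2"
  let ?G = "affine2 (b2 / D) (- (b1 / D)) ((b1 * c2 - b2 * c1) / D) (- (a2 / D)) (a1 / D) ((a2 * c1 - a1 * c2) / D)"
  have "D \<noteq> 0" using assms D_def by simp
  then have GF: "?G (?F x) = x" and FG: "?F (?G x) = x" for x
    unfolding affine2_def by (simp_all add: prod_eq_iff field_simps) (simp_all add: D_def algebra_simps)
  have "surj ?F" by (rule surjI[of ?F ?G]) (rule FG)
  moreover have "surj ?G" by (rule surjI[of ?G ?F]) (rule GF)
  ultimately have "local_diffeo_at p ?F ?G" unfolding local_diffeo_at_def
    by (rule_tac exI[of _ "UNIV :: (real \<times> real) set"], rule_tac exI[of _ "UNIV :: (real \<times> real) set"])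
       (simp add: smooth_on_affine2 GF FG)
  then show ?thesis by (rule that)
qed

lemma det2_scaleR: "det2 (c1 *\<^sub>R A) (c2 *\<^sub>R B) = c1 * c2 * det2 A B"
  unfolding det2_def by (simp add: algebra_simps)

lemma det2_linear_image:
  fixes D :: "real \<times> real \<Rightarrow> real \<times> real"
  assumes "linear D"
  shows "det2 (D A) (D B) = det2 (D (1, 0)) (D (0, 1)) * det2 A B"
  using linear_plane_decompose[OF assms, of A] linear_plane_decompose[OF assms, of B]
  by (simp add: det2_def algebra_simps)

lemma det2_eq_0_imp_kernel:
  assumes "det2 L1 L2 = 0"
  obtains v where "v \<noteq> (0::real \<times> real)" "fst v *\<^sub>R L1 + snd v *\<^sub>R L2 = 0"
proof -
  obtain p q r s where L: "L1 = (p, q)" "L2 = (r, s)" by (cases L1, cases L2) auto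
  then have d: "p * s - q * r = 0" using assms unfolding det2_def by simp
  consider "s \<noteq> 0 \<or> q \<noteq> 0" | "s = 0" "q = 0" "r \<noteq> 0 \<or> p \<noteq> 0" | "s = 0" "q = 0" "r = 0" "p = 0"
    by blast
  then show ?thesis
  proof cases
    case 1
    then show ?thesis using d L by (intro that[of "(s, -q)"]) (auto simp: algebra_simps zero_prod_def)
  next
    case 2
    then show ?thesis using d L by (intro that[of "(-r, p)"]) (auto simp: algebra_simps zero_prod_def)
  next
    case 3
    then show ?thesis using L by (intro that[of "(1, 0)"]) (simp_all add: zero_prod_def)
  qed
qed

lemma det2_frechet_derivative_neq_0:
  fixes G H :: "real \<times> real \<Rightarrow> real \<times> real"
  assumes "open V" "p \<in> V" "\<And>y. y \<in> V \<Longrightarrow> H (G y) = y"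
    and G: "G differentiable (at p)" and H: "H differentiable (at (G p))"
  shows "det2 (frechet_derivative G (at p) (1, 0)) (frechet_derivative G (at p) (0, 1)) \<noteq> 0"
proof
  let ?D = "frechet_derivative G (at p)" and ?E = "frechet_derivative H (at (G p))"
  assume "det2 (?D (1, 0)) (?D (0, 1)) = 0"
  then obtain v where v: "v \<noteq> 0" "fst v *\<^sub>R ?D (1, 0) + snd v *\<^sub>R ?D (0, 1) = 0"
    by (rule det2_eq_0_imp_kernel)
  then have "?D v = 0" using linear_plane_decompose[OF linear_frechet_derivative[OF G], of v] by simp
  have "((H \<circ> G) has_derivative (?E \<circ> ?D)) (at p)"
    by (rule diff_chain_at) (use G H frechet_derivative_works in blast)+
  moreover have "((H \<circ> G) has_derivative (\<lambda>x. x)) (at p)"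
    by (rule has_derivative_transform_within_open[OF has_derivative_ident assms(1,2)]) (use assms(3) in auto)
  ultimately have "?E \<circ> ?D = (\<lambda>x. x)" by (rule has_derivative_unique)
  then have "v = ?E (?D v)" by (metis comp_apply)
  then show False using \<open>?D v = 0\<close> linear_0[OF linear_frechet_derivative[OF H]] v(1) by simp
qed

section \<open>The inverse function theorem in one variable\<close>

lemma inverse_function_on_interval:
  fixes \<phi> :: "real \<Rightarrow> real"
  assumes "a < b" and der: "\<And>x. x \<in> {a..b} \<Longrightarrow> (\<phi> has_real_derivative \<phi>' x) (at x)"
    and pos: "\<And>x. x \<in> {a..b} \<Longrightarrow> 0 < \<phi>' x"
  obtains \<psi> where "\<phi> ` {a<..<b} = {\<phi> a<..<\<phi> b}" "\<And>x. x \<in> {a..b} \<Longrightarrow> \<psi> (\<phi> x) = x"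
    "\<And>y. y \<in> {\<phi> a<..<\<phi> b} \<Longrightarrow> \<phi> (\<psi> y) = y"
    "\<And>y. y \<in> {\<phi> a<..<\<phi> b} \<Longrightarrow> (\<psi> has_real_derivative inverse (\<phi>' (\<psi> y))) (at y)"
proof -
  have incr: "\<phi> x < \<phi> y" if "x \<in> {a..b}" "y \<in> {a..b}" "x < y" for x y
  proof (rule DERIV_pos_imp_increasing[OF that(3)])
    fix u assume "x \<le> u" "u \<le> y"
    then have "u \<in> {a..b}" using that by auto
    then show "\<exists>z. DERIV \<phi> u :> z \<and> z > 0" using der pos by blast
  qed
  then have inj: "inj_on \<phi> {a..b}"
    by (intro inj_onI) (metis linorder_neqE_linordered_idom order_less_irrefl)
  have "isCont \<phi> x" if "x \<in> {a..b}" for x using der[OF that] by (rule DERIV_isCont)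
  then have cont: "continuous_on {a..b} \<phi>" by (simp add: continuous_at_imp_continuous_on)
  define \<psi> where "\<psi> = the_inv_into {a..b} \<phi>"
  have \<psi>\<phi>: "\<psi> (\<phi> x) = x" if "x \<in> {a..b}" for x using the_inv_into_f_f[OF inj that] by (simp add: \<psi>_def)
  have \<phi>\<psi>: "\<phi> (\<psi> y) = y" if "y \<in> \<phi> ` {a..b}" for y using f_the_inv_into_f[OF inj that] by (simp add: \<psi>_def)
  have image: "\<phi> ` {a<..<b} = {\<phi> a<..<\<phi> b}"
  proof
    show "\<phi> ` {a<..<b} \<subseteq> {\<phi> a<..<\<phi> b}" using incr \<open>a < b\<close> by auto
  next
    show "{\<phi> a<..<\<phi> b} \<subseteq> \<phi> ` {a<..<b}"
    proof
      fix y assume y: "y \<in> {\<phi> a<..<\<phi> b}"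
      then obtain x where x: "a \<le> x" "x \<le> b" "\<phi> x = y"
        using IVT'[of \<phi> a y b] \<open>a < b\<close> cont by auto
      then have "x \<in> {a<..<b}" using y by (auto simp: order.order_iff_strict)
      then show "y \<in> \<phi> ` {a<..<b}" using x by auto
    qed
  qed
  have sub: "{\<phi> a<..<\<phi> b} \<subseteq> \<phi> ` {a..b}"
    unfolding image[symmetric] by (rule image_mono) auto
  have "continuous_on (\<phi> ` {a..b}) \<psi>"
    unfolding \<psi>_def by (rule continuous_on_inv[OF cont compact_Icc]) (use \<psi>\<phi> \<psi>_def in auto)
  then have cont\<psi>: "continuous_on {\<phi> a<..<\<phi> b} \<psi>" using sub continuous_on_subset by blast
  have d\<psi>: "(\<psi> has_real_derivative inverse (\<phi>' (\<psi> y))) (at y)" if y: "y \<in> {\<phi> a<..<\<phi> b}" for y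
  proof (rule DERIV_inverse_function[where a="\<phi> a" and b="\<phi> b"])
    have "\<psi> y \<in> {a..b}" using y sub \<psi>\<phi> by auto
    then show "DERIV \<phi> (\<psi> y) :> \<phi>' (\<psi> y)" "\<phi>' (\<psi> y) \<noteq> 0" using der pos by force+
    show "\<phi> a < y" "y < \<phi> b" using y by auto
    show "\<phi> (\<psi> z) = z" if "\<phi> a < z" "z < \<phi> b" for z using \<phi>\<psi> sub that by auto
    show "isCont \<psi> y" using cont\<psi> y continuous_on_eq_continuous_at[OF open_greaterThanLessThan] by blast
  qed
  show ?thesis
  proof (rule that[OF image \<psi>\<phi> _ d\<psi>])
    show "\<phi> (\<psi> y) = y" if "y \<in> {\<phi> a<..<\<phi> b}" for y using \<phi>\<psi> sub that by blast
  qed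
qed

lemma curve_smooth_on_inverse_function:
  fixes \<psi> \<phi>' :: "real \<Rightarrow> real"
  assumes "curve_smooth_on UNIV \<phi>'" "\<And>y. y \<in> V \<Longrightarrow> (\<psi> has_real_derivative inverse (\<phi>' (\<psi> y))) (at y)"
    and "\<And>y. y \<in> V \<Longrightarrow> \<phi>' (\<psi> y) \<noteq> 0"
  shows "curve_smooth_on V \<psi>"
  unfolding curve_smooth_on_def
proof
  fix k show "curve_Ck_on k V \<psi>"
  proof (induction k)
    case 0 show ?case
      using DERIV_isCont[OF assms(2)] by (simp add: continuous_at_imp_continuous_on)
  next
    case (Suc k)
    have "curve_Ck_on k UNIV \<phi>'" using assms(1) unfolding curve_smooth_on_def by blast
    then have "curve_Ck_on k V (\<lambda>y. \<phi>' (\<psi> y))" using Suc.IH by (rule curve_Ck_on_comp) simp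
    then have "curve_Ck_on k V (\<lambda>y. inverse (\<phi>' (\<psi> y)))" using assms(3) by (rule curve_Ck_on_inverse)
    moreover have "\<forall>y\<in>V. (\<psi> has_vector_derivative inverse (\<phi>' (\<psi> y))) (at y)"
      using assms(2) by (simp add: has_real_derivative_iff_has_vector_derivative)
    ultimately show ?case unfolding curve_Ck_on.simps(2)
      by (intro exI[of _ "\<lambda>y. inverse (\<phi>' (\<psi> y))"]) simp
  qed
qed

definition near_identity :: "(real \<Rightarrow> real) \<Rightarrow> bool" where
  "near_identity \<phi> \<longleftrightarrow> curve_smooth_on UNIV \<phi> \<and> \<phi> 0 = 0 \<and> (\<phi> has_real_derivative 1) (at 0)"

lemma near_identity_compose:
  assumes "near_identity \<phi>" "near_identity \<theta>"
  shows "near_identity (\<lambda>s. \<phi> (\<theta> s))"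
proof -
  have "curve_Ck_on k UNIV (\<lambda>s. \<phi> (\<theta> s))" for k
    using curve_Ck_on_comp[of k UNIV \<phi> UNIV \<theta>] assms unfolding near_identity_def curve_smooth_on_def by simp
  then have "curve_smooth_on UNIV (\<lambda>s. \<phi> (\<theta> s))" unfolding curve_smooth_on_def by blast
  moreover have "((\<lambda>s. \<phi> (\<theta> s)) has_real_derivative 1 * 1) (at 0)"
    using assms unfolding near_identity_def by (intro DERIV_chain2) auto
  ultimately show ?thesis using assms unfolding near_identity_def by simp
qed

lemma local_diffeo_at_inverse_near_identity:
  assumes "near_identity \<phi>"
  obtains \<psi> where "\<psi> 0 = 0" "local_diffeo_at 0 \<psi> \<phi>"
proof -
  have sm: "curve_smooth_on UNIV \<phi>" and \<phi>0: "\<phi> 0 = 0" and d1: "(\<phi> has_real_derivative 1) (at 0)"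
    using assms unfolding near_identity_def by auto
  define \<phi>' where "\<phi>' = nth_deriv 1 \<phi>"
  have der: "(\<phi> has_real_derivative \<phi>' x) (at x)" for x
    using curve_smooth_on_nth_deriv[OF open_UNIV sm, of 0] unfolding \<phi>'_def
    by (simp add: has_real_derivative_iff_has_vector_derivative)
  have sm': "curve_smooth_on UNIV \<phi>'" unfolding \<phi>'_def using curve_smooth_on_nth_deriv[OF open_UNIV sm] by blast
  have "continuous_on UNIV \<phi>'"
    using sm' curve_Ck_on_imp_continuous_on unfolding curve_smooth_on_def by blast
  then have "isCont \<phi>' 0" by (simp add: continuous_on_eq_continuous_at)
  moreover have "\<phi>' 0 = 1" using der[of 0] d1 DERIV_unique by blast
  ultimately obtain d where d: "0 < d" "\<And>x. dist x 0 < d \<Longrightarrow> dist (\<phi>' x) 1 < 1"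
    unfolding continuous_at_eps_delta by (metis zero_less_one)
  define \<delta> where "\<delta> = d / 2"
  have \<delta>: "0 < \<delta>" using d by (simp add: \<delta>_def)
  have pos: "0 < \<phi>' x" if "x \<in> {-\<delta>..\<delta>}" for x
  proof -
    have "\<bar>x\<bar> < d" using that d(1) by (auto simp: \<delta>_def)
    then show ?thesis using d(2)[of x] by (simp add: dist_norm)
  qed
  obtain \<psi> where img: "\<phi> ` {-\<delta><..<\<delta>} = {\<phi> (-\<delta>)<..<\<phi> \<delta>}" and \<psi>\<phi>: "\<And>x. x \<in> {-\<delta>..\<delta>} \<Longrightarrow> \<psi> (\<phi> x) = x"
    and \<phi>\<psi>: "\<And>y. y \<in> {\<phi> (-\<delta>)<..<\<phi> \<delta>} \<Longrightarrow> \<phi> (\<psi> y) = y"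
    and d\<psi>: "\<And>y. y \<in> {\<phi> (-\<delta>)<..<\<phi> \<delta>} \<Longrightarrow> (\<psi> has_real_derivative inverse (\<phi>' (\<psi> y))) (at y)"
    by (rule inverse_function_on_interval[of "-\<delta>" \<delta> \<phi> \<phi>']) (use \<delta> der pos in auto)
  let ?V = "{\<phi> (-\<delta>)<..<\<phi> \<delta>}" and ?W = "{-\<delta><..<\<delta>}"
  have "\<psi> ` ?V = (\<lambda>x. \<psi> (\<phi> x)) ` ?W" unfolding img[symmetric] image_image ..
  also have "\<dots> = (\<lambda>x. x) ` ?W" using \<psi>\<phi> by (intro image_cong) auto
  finally have \<psi>V: "\<psi> ` ?V = ?W" by simp
  have nz: "\<phi>' (\<psi> y) \<noteq> 0" if "y \<in> ?V" for y
  proof -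
    have "\<psi> y \<in> ?W" using \<psi>V that by blast
    then show ?thesis using pos[of "\<psi> y"] by simp
  qed
  have "curve_smooth_on ?V \<psi>" by (rule curve_smooth_on_inverse_function[OF sm' d\<psi> nz])
  then have s\<psi>: "smooth_on ?V \<psi>" by (simp add: smooth_on_iff_curve_smooth_on)
  have s\<phi>: "smooth_on ?W \<phi>"
    using curve_smooth_on_subset[OF _ sm, of ?W] by (simp add: smooth_on_iff_curve_smooth_on)
  have "\<phi> 0 \<in> \<phi> ` ?W" using \<delta> by simp
  then have "0 \<in> ?V" using img \<phi>0 by simp
  have "local_diffeo_at 0 \<psi> \<phi>"
    unfolding local_diffeo_at_def
  proof (rule exI[of _ ?V], rule exI[of _ ?W], intro conjI)
    show "\<forall>x\<in>?V. \<phi> (\<psi> x) = x" using \<phi>\<psi> by blast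
    show "\<forall>y\<in>?W. \<psi> (\<phi> y) = y" using \<psi>\<phi> by simp
  qed (use \<open>0 \<in> ?V\<close> img \<psi>V s\<psi> s\<phi> in simp_all)
  moreover have "\<psi> 0 = 0" using \<psi>\<phi>[of 0] \<phi>0 \<delta> by simp
  ultimately show ?thesis using that by blast
qed

section \<open>Polynomial reparametrizations\<close>

lemma binomial_second_order_bound: "\<exists>B. \<forall>q::real. \<bar>q\<bar> \<le> 1 \<longrightarrow> \<bar>(1 + q) ^ m - 1 - real m * q\<bar> \<le> B * q ^ 2"
proof (induction m)
  case 0 then show ?case by (intro exI[of _ 0]) simp
next
  case (Suc m)
  then obtain B where B: "\<And>q::real. \<bar>q\<bar> \<le> 1 \<Longrightarrow> \<bar>(1 + q) ^ m - 1 - real m * q\<bar> \<le> B * q ^ 2" by blast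
  show ?case
  proof (intro exI[of _ "2 * B + real m"] allI impI)
    fix q :: real assume q: "\<bar>q\<bar> \<le> 1"
    define e where "e = (1 + q) ^ m - 1 - real m * q"
    have id: "(1 + q) ^ Suc m - 1 - real (Suc m) * q = (1 + q) * e + real m * q ^ 2"
      unfolding e_def by (simp add: algebra_simps power2_eq_square)
    have eb: "\<bar>e\<bar> \<le> B * q ^ 2" using B[OF q] unfolding e_def .
    have "\<bar>(1 + q) * e\<bar> \<le> 2 * \<bar>e\<bar>"
    proof -
      have "\<bar>1 + q\<bar> \<le> 2" using q by linarith
      then show ?thesis by (simp add: abs_mult mult_right_mono)
    qed
    moreover have "\<bar>(1 + q) * e + real m * q ^ 2\<bar> \<le> \<bar>(1 + q) * e\<bar> + \<bar>real m * q ^ 2\<bar>"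
      by (rule abs_triangle_ineq)
    moreover have "\<bar>real m * q ^ 2\<bar> = real m * q ^ 2" by simp
    ultimately have "\<bar>(1 + q) * e + real m * q ^ 2\<bar> \<le> 2 * (B * q ^ 2) + real m * q ^ 2"
      using eb by linarith
    then show "\<bar>(1 + q) ^ Suc m - 1 - real (Suc m) * q\<bar> \<le> (2 * B + real m) * q ^ 2"
      unfolding id by (simp add: algebra_simps)
  qed
qed

definition reparam :: "real \<Rightarrow> nat \<Rightarrow> real \<Rightarrow> real" where
  "reparam p j s = s + p * s ^ j"

lemma bigO_at0_reparam_power:
  assumes "2 \<le> j"
  shows "bigO_at0 (m + 2 * j - 2) (\<lambda>s. reparam p j s ^ m - s ^ m - real m * p * s ^ (m + j - 1))"
proof -
  from le_Suc_ex[OF assms] obtain i where ji: "j = 2 + i" by blast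
  obtain B where B: "\<And>q::real. \<bar>q\<bar> \<le> 1 \<Longrightarrow> \<bar>(1 + q) ^ m - 1 - real m * q\<bar> \<le> B * q ^ 2"
    using binomial_second_order_bound by blast
  have e1: "m + 2 * j - 2 = m + 2 * (i + 1)" "m + j - 1 = m + (i + 1)" using ji by auto
  show ?thesis unfolding e1
  proof (rule bigO_at0I[of "1 / (\<bar>p\<bar> + 1)" _ "B * p ^ 2"])
    show "0 < 1 / (\<bar>p\<bar> + 1)" by simp
  next
    fix s :: real assume s: "\<bar>s\<bar> < 1 / (\<bar>p\<bar> + 1)"
    have "1 / (\<bar>p\<bar> + 1) \<le> 1" by simp
    then have s1: "\<bar>s\<bar> < 1" using s by linarith
    define q where "q = p * s ^ (i + 1)"
    have "\<bar>s\<bar> ^ (i + 1) \<le> \<bar>s\<bar> ^ 1" using s1 by (intro power_decreasing) auto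
    then have "\<bar>q\<bar> \<le> \<bar>p\<bar> * \<bar>s\<bar>" unfolding q_def by (simp add: abs_mult power_abs mult_left_mono)
    also have "\<dots> \<le> 1"
    proof -
      have "\<bar>p\<bar> * \<bar>s\<bar> \<le> (\<bar>p\<bar> + 1) * \<bar>s\<bar>" by (intro mult_right_mono) auto
      also have "\<dots> \<le> 1" using s by (simp add: field_simps)
      finally show ?thesis .
    qed
    finally have q1: "\<bar>q\<bar> \<le> 1" .
    have "reparam p j s = s * (1 + q)" unfolding reparam_def q_def ji by (simp add: algebra_simps)
    then have r: "reparam p j s ^ m = s ^ m * (1 + q) ^ m" by (simp only: power_mult_distrib)
    have sp: "s ^ (m + (i + 1)) = s ^ m * s ^ (i + 1)" by (simp only: power_add)
    have "reparam p j s ^ m - s ^ m - real m * p * s ^ (m + (i + 1)) = s ^ m * ((1 + q) ^ m - 1 - real m * q)"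
      unfolding r sp by (simp add: q_def algebra_simps)
    then have "\<bar>reparam p j s ^ m - s ^ m - real m * p * s ^ (m + (i + 1))\<bar> \<le> \<bar>s\<bar> ^ m * (B * q ^ 2)"
      using B[OF q1] by (simp add: abs_mult power_abs mult_left_mono)
    also have "\<bar>s\<bar> ^ m * (B * q ^ 2) = (B * p ^ 2) * \<bar>s\<bar> ^ (m + 2 * (i + 1))"
    proof -
      have "q ^ 2 = p ^ 2 * (s ^ (i + 1)) ^ 2" unfolding q_def by (simp add: power_mult_distrib)
      also have "(s ^ (i + 1)) ^ 2 = \<bar>s ^ (i + 1)\<bar> ^ 2" by (rule power2_abs[symmetric])
      also have "\<dots> = (\<bar>s\<bar> ^ (i + 1)) ^ 2" by (simp only: power_abs)
      also have "\<dots> = \<bar>s\<bar> ^ (2 * (i + 1))" by (simp only: power_mult[symmetric] mult.commute)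
      finally show ?thesis by (simp add: power_add algebra_simps)
    qed
    finally show "norm (reparam p j s ^ m - s ^ m - real m * p * s ^ (m + (i + 1))) \<le> B * p\<^sup>2 * \<bar>s\<bar> ^ (m + 2 * (i + 1))"
      by simp
  qed
qed

lemma near_identity_reparam: "2 \<le> j \<Longrightarrow> near_identity (reparam p j)"
  unfolding near_identity_def
proof (intro conjI)
  assume j: "2 \<le> j"
  show "curve_smooth_on UNIV (reparam p j)"
    unfolding reparam_def by (intro curve_smooth_on_intros)
  show "reparam p j 0 = 0" using j by (simp add: reparam_def)
  have "(reparam p j has_real_derivative 1 + p * (real j * 0 ^ (j - 1))) (at 0)"
    unfolding reparam_def by (auto intro!: derivative_eq_intros)
  then show "(reparam p j has_real_derivative 1) (at 0)" using j by (simp add: power_0_left)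
qed

lemma bigO_at0_1_reparam: "1 \<le> j \<Longrightarrow> bigO_at0 1 (reparam p j)"
proof -
  assume j: "1 \<le> j"
  show ?thesis
  proof (rule bigO_at0I[of 1 _ "1 + \<bar>p\<bar>"])
    fix s :: real assume s: "\<bar>s\<bar> < 1"
    have "\<bar>s\<bar> ^ j \<le> \<bar>s\<bar> ^ 1" using s j by (intro power_decreasing) auto
    then have "\<bar>p * s ^ j\<bar> \<le> \<bar>p\<bar> * \<bar>s\<bar>" by (simp add: abs_mult power_abs mult_left_mono)
    then show "norm (reparam p j s) \<le> (1 + \<bar>p\<bar>) * \<bar>s\<bar> ^ 1"
      unfolding reparam_def using abs_triangle_ineq[of s "p * s ^ j"] by (simp add: algebra_simps)
  qed simp
qed

lemma bigO_at0_reparam_power_diff: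
  assumes "2 \<le> j" shows "bigO_at0 (m + j - 1) (\<lambda>s. reparam p j s ^ m - s ^ m)"
proof -
  have a: "bigO_at0 (m + j - 1) (\<lambda>s. reparam p j s ^ m - s ^ m - real m * p * s ^ (m + j - 1))"
    using bigO_at0_mono[OF _ bigO_at0_reparam_power[OF assms]] assms by simp
  have b: "bigO_at0 (m + j - 1) (\<lambda>s. real m * p * s ^ (m + j - 1))" by (rule bigO_at0_monom_real) simp
  show ?thesis using bigO_at0_add[OF a b] by simp
qed

lemma bigO_at0_reparam_leading_term:
  fixes f :: "real \<Rightarrow> real"
  assumes f: "bigO_at0 r (\<lambda>t. f t - t ^ m)" and j: "2 \<le> j" and q: "q \<le> r" "q \<le> m + j - 1"
  shows "bigO_at0 q (\<lambda>s. f (reparam p j s) - s ^ m)"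
proof -
  have a: "bigO_at0 r (\<lambda>s. f (reparam p j s) - reparam p j s ^ m)"
    using bigO_at0_comp[OF f bigO_at0_1_reparam] j by simp
  have b: "bigO_at0 (m + j - 1) (\<lambda>s. reparam p j s ^ m - s ^ m)" by (rule bigO_at0_reparam_power_diff[OF j])
  have "bigO_at0 q (\<lambda>s. (f (reparam p j s) - reparam p j s ^ m) + (reparam p j s ^ m - s ^ m))"
    by (rule bigO_at0_add[OF bigO_at0_mono[OF q(1) a] bigO_at0_mono[OF q(2) b]])
  then show ?thesis by simp
qed

lemma bigO_at0_reparam_shift_term:
  fixes f :: "real \<Rightarrow> real"
  assumes f: "bigO_at0 (Suc k) (\<lambda>t. f t - t ^ m - a * t ^ k)" and km: "m + 1 \<le> k" and j: "j = k - m + 1"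
  shows "bigO_at0 (Suc k) (\<lambda>s. f (reparam p j s) - s ^ m - (real m * p + a) * s ^ k)"
proof -
  have j2: "2 \<le> j" using km j by simp
  have t1: "bigO_at0 (Suc k) (\<lambda>s. f (reparam p j s) - reparam p j s ^ m - a * reparam p j s ^ k)"
    using bigO_at0_comp[OF f bigO_at0_1_reparam] j2 by simp
  have le: "Suc k \<le> m + 2 * j - 2" using km j by simp
  have t2: "bigO_at0 (Suc k) (\<lambda>s. reparam p j s ^ m - s ^ m - real m * p * s ^ (m + j - 1))"
    by (rule bigO_at0_mono[OF le bigO_at0_reparam_power[OF j2]])
  have "bigO_at0 (Suc k) (\<lambda>s. reparam p j s ^ k - s ^ k)"
    by (rule bigO_at0_mono[OF _ bigO_at0_reparam_power_diff[OF j2]]) (use km j in simp)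
  from bigO_at0_cscale[OF this, of a] have t3: "bigO_at0 (Suc k) (\<lambda>s. a * (reparam p j s ^ k - s ^ k))" by simp
  have e: "m + j - 1 = k" using km j by simp
  have "bigO_at0 (Suc k) (\<lambda>s. (f (reparam p j s) - reparam p j s ^ m - a * reparam p j s ^ k) +
       (reparam p j s ^ m - s ^ m - real m * p * s ^ (m + j - 1)) + a * (reparam p j s ^ k - s ^ k))"
    by (rule bigO_at0_add[OF bigO_at0_add[OF t1 t2] t3])
  then show ?thesis unfolding e by (simp add: algebra_simps)
qed

lemma reparam_kills_next_term:
  fixes f :: "real \<Rightarrow> real"
  assumes "smooth_near0 f" "bigO_at0 k (\<lambda>t. f t - t ^ m)" "1 \<le> m" "m < k" "j = k - m + 1"
  obtains p where "bigO_at0 (Suc k) (\<lambda>s. f (reparam p j s) - s ^ m)"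
proof -
  obtain a where a: "bigO_at0 (Suc k) (\<lambda>t. (f t - t ^ m) - t ^ k *\<^sub>R a)"
    using bigO_at0_next_term[OF smooth_near0_diff[OF assms(1) smooth_near0_power] assms(2)] by blast
  define p where "p = - a / real m"
  have "bigO_at0 (Suc k) (\<lambda>s. f (reparam p j s) - s ^ m - (real m * p + a) * s ^ k)"
    using a assms(3-5) by (intro bigO_at0_reparam_shift_term) (auto simp: mult.commute)
  moreover have "real m * p + a = 0" using assms(3) by (simp add: p_def)
  ultimately show ?thesis using that by simp
qed

lemma bigO_at0_power_expansion:
  fixes u :: "real \<Rightarrow> real"
  assumes U: "bigO_at0 3 (\<lambda>t. u t - (a * t + b * t ^ 2))"
  shows "bigO_at0 (m + 2) (\<lambda>t. u t ^ m - (a ^ m * t ^ m + real m * a ^ (m - 1) * b * t ^ (m + 1)))"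
proof (induction m)
  case 0 then show ?case by (simp add: bigO_at0_zero)
next
  case (Suc m)
  define A where "A k t = a ^ k * t ^ k + real k * a ^ (k - 1) * b * t ^ (k + 1)" for k and t :: real
  have u1: "bigO_at0 1 u"
  proof -
    have "bigO_at0 1 (\<lambda>t. (u t - (a * t + b * t ^ 2)) + (a * t + b * t ^ 2))"
      using bigO_at0_add[OF bigO_at0_mono[OF _ U] bigO_at0_add[OF bigO_at0_monom_real[of 1 1 a] bigO_at0_monom_real[of 1 2 b]]] by simp
    then show ?thesis by simp
  qed
  have Am: "bigO_at0 m (A m)" unfolding A_def by (intro bigO_at0_add bigO_at0_monom_real) auto
  have id: "A 1 t * A m t - A (Suc m) t = real m * a ^ (m - 1) * b ^ 2 * t ^ (m + 3)" for t
  proof (cases m)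
    case 0 then show ?thesis unfolding A_def by (simp add: algebra_simps power2_eq_square)
  next
    case (Suc i)
    then show ?thesis unfolding A_def by (simp add: algebra_simps power2_eq_square power_add eval_nat_numeral)
  qed
  have pe: "u t ^ Suc m - A (Suc m) t = u t * (u t ^ m - A m t) + (u t - A 1 t) * A m t + (A 1 t * A m t - A (Suc m) t)" for t
    by (simp add: algebra_simps)
  have "bigO_at0 (Suc m + 2) (\<lambda>t. u t * (u t ^ m - A m t) + (u t - A 1 t) * A m t + (A 1 t * A m t - A (Suc m) t))"
  proof (intro bigO_at0_add)
    show "bigO_at0 (Suc m + 2) (\<lambda>t. u t * (u t ^ m - A m t))"
      using bigO_at0_mult[OF u1 Suc.IH] unfolding A_def by simp
    have "bigO_at0 3 (\<lambda>t. u t - A 1 t)" using U unfolding A_def by (simp add: power2_eq_square)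
    from bigO_at0_mult[OF this Am] have "bigO_at0 (3 + m) (\<lambda>t. (u t - A 1 t) * A m t)" .
    moreover have "3 + m = Suc m + 2" by simp
    ultimately show "bigO_at0 (Suc m + 2) (\<lambda>t. (u t - A 1 t) * A m t)" by metis
    show "bigO_at0 (Suc m + 2) (\<lambda>t. A 1 t * A m t - A (Suc m) t)"
      unfolding id by (rule bigO_at0_monom_real) simp
  qed
  then have "bigO_at0 (Suc m + 2) (\<lambda>t. u t ^ Suc m - A (Suc m) t)" unfolding pe .
  then show ?case unfolding A_def by simp
qed

section \<open>Sufficiency of the derivative conditions\<close>

lemma sum_atMost_Suc_three_terms:
  fixes f :: "nat \<Rightarrow> 'b::comm_monoid_add"
  assumes "1 \<le> n" "\<And>k. k \<in> {1..n-1} \<Longrightarrow> f k = 0"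
  shows "(\<Sum>k\<le>n+1. f k) = f 0 + f n + f (n + 1)"
proof -
  have "(\<Sum>k\<le>n+1. f k) = (\<Sum>k\<in>{0, n, n+1}. f k)"
  proof (rule sum.mono_neutral_cong_right)
    show "\<forall>x\<in>{..n + 1} - {0, n, n + 1}. f x = 0"
    proof
      fix x assume "x \<in> {..n + 1} - {0, n, n + 1}"
      then have "x \<in> {1..n-1}" by auto
      then show "f x = 0" by (rule assms(2))
    qed
  qed auto
  also have "\<dots> = f 0 + f n + f (n + 1)" using assms(1) by (simp add: add.assoc)
  finally show ?thesis .
qed

lemma two_term_expansion_of_nth_deriv:
  fixes \<gamma> :: "real \<Rightarrow> 'b::real_normed_vector"
  assumes "smooth_near0 \<gamma>" "1 \<le> n" "\<forall>k\<in>{1..n-1}. nth_deriv k \<gamma> 0 = 0"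
  shows "bigO_at0 (n + 2) (\<lambda>t. \<gamma> t - \<gamma> 0 - t ^ n *\<^sub>R ((1 / fact n) *\<^sub>R nth_deriv n \<gamma> 0)
            - t ^ (n + 1) *\<^sub>R ((1 / fact (n + 1)) *\<^sub>R nth_deriv (n + 1) \<gamma> 0))"
proof -
  have "(\<Sum>k\<le>n+1. (t ^ k / fact k) *\<^sub>R nth_deriv k \<gamma> 0) = \<gamma> 0 + t ^ n *\<^sub>R ((1 / fact n) *\<^sub>R nth_deriv n \<gamma> 0)
      + t ^ (n + 1) *\<^sub>R ((1 / fact (n + 1)) *\<^sub>R nth_deriv (n + 1) \<gamma> 0)" for t
    using sum_atMost_Suc_three_terms[OF assms(2), of "\<lambda>k. (t ^ k / fact k) *\<^sub>R nth_deriv k \<gamma> 0"] assms(3)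
    by (simp add: divide_inverse_commute mult_ac)
  then show ?thesis using taylor_bigO_at0[OF assms(1), of "n + 1"] by (simp add: algebra_simps)
qed

text \<open>The affine map sending \<open>\<gamma> 0\<close> to the origin and \<open>A\<close>, \<open>B\<close> to the standard basis.\<close>

lemma affine2_normalizes_two_term_expansion:
  fixes \<gamma> :: "real \<Rightarrow> real \<times> real"
  assumes exp: "bigO_at0 (n + 2) (\<lambda>t. \<gamma> t - \<gamma> 0 - t ^ n *\<^sub>R A - t ^ (n + 1) *\<^sub>R B)"
    and det: "det2 A B \<noteq> 0"
  obtains a1 b1 c1 a2 b2 c2 where "a1 * b2 - b1 * a2 \<noteq> 0"
    "bigO_at0 (n + 2) (\<lambda>t. fst (affine2 a1 b1 c1 a2 b2 c2 (\<gamma> t)) - t ^ n)"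
    "bigO_at0 (n + 2) (\<lambda>t. snd (affine2 a1 b1 c1 a2 b2 c2 (\<gamma> t)) - t ^ (n + 1))"
proof -
  define d where "d = det2 A B"
  define R where "R t = \<gamma> t - \<gamma> 0 - t ^ n *\<^sub>R A - t ^ (n + 1) *\<^sub>R B" for t
  define x0 y0 where "x0 = fst (\<gamma> 0)" and "y0 = snd (\<gamma> 0)"
  let ?N = "affine2 (snd B / d) (- fst B / d) ((fst B * y0 - snd B * x0) / d)
      (- snd A / d) (fst A / d) ((snd A * x0 - fst A * y0) / d)"
  have "d \<noteq> 0" using det d_def by simp
  have \<gamma>: "fst (\<gamma> t) = x0 + t ^ n * fst A + t ^ (n + 1) * fst B + fst (R t)"
    "snd (\<gamma> t) = y0 + t ^ n * snd A + t ^ (n + 1) * snd B + snd (R t)" for t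
    by (simp_all add: R_def x0_def y0_def)
  have e1: "fst (?N (\<gamma> t)) - t ^ n = snd B / d * fst (R t) - fst B / d * snd (R t)" for t
  proof -
    have "fst (?N (\<gamma> t)) = (snd B * fst (\<gamma> t) - fst B * snd (\<gamma> t) + (fst B * y0 - snd B * x0)) / d"
      by (simp add: affine2_def add_divide_distrib diff_divide_distrib)
    also have "snd B * fst (\<gamma> t) - fst B * snd (\<gamma> t) + (fst B * y0 - snd B * x0)
        = t ^ n * d + (snd B * fst (R t) - fst B * snd (R t))"
      unfolding \<gamma> d_def det2_def by (simp add: algebra_simps)
    finally show ?thesis using \<open>d \<noteq> 0\<close> by (simp add: field_simps)
  qed
  have e2: "snd (?N (\<gamma> t)) - t ^ (n + 1) = fst A / d * snd (R t) - snd A / d * fst (R t)" for t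
  proof -
    have "snd (?N (\<gamma> t)) = (fst A * snd (\<gamma> t) - snd A * fst (\<gamma> t) + (snd A * x0 - fst A * y0)) / d"
      by (simp add: affine2_def add_divide_distrib diff_divide_distrib)
    also have "fst A * snd (\<gamma> t) - snd A * fst (\<gamma> t) + (snd A * x0 - fst A * y0)
        = t ^ (n + 1) * d + (fst A * snd (R t) - snd A * fst (R t))"
      unfolding \<gamma> d_def det2_def by (simp add: algebra_simps)
    finally show ?thesis using \<open>d \<noteq> 0\<close> by (simp add: field_simps)
  qed
  have Rc: "bigO_at0 (n + 2) (\<lambda>t. c * fst (R t))" "bigO_at0 (n + 2) (\<lambda>t. c * snd (R t))" for c
    using bigO_at0_cscale[OF bigO_at0_fst[OF exp], of c] bigO_at0_cscale[OF bigO_at0_snd[OF exp], of c]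
    unfolding R_def by simp_all
  have "bigO_at0 (n + 2) (\<lambda>t. fst (?N (\<gamma> t)) - t ^ n)" "bigO_at0 (n + 2) (\<lambda>t. snd (?N (\<gamma> t)) - t ^ (n + 1))"
    unfolding e1 e2 by (intro bigO_at0_diff Rc)+
  moreover have "(snd B / d) * (fst A / d) - (- fst B / d) * (- snd A / d) \<noteq> 0"
  proof -
    have "(snd B / d) * (fst A / d) - (- fst B / d) * (- snd A / d) = (snd B * fst A - fst B * snd A) / (d * d)"
      by (simp add: diff_divide_distrib ac_simps)
    then show ?thesis using \<open>d \<noteq> 0\<close> by (simp add: d_def det2_def ac_simps)
  qed
  ultimately show ?thesis by (rule that[rotated])
qed

lemma reparam_normal_form:
  fixes X Y :: "real \<Rightarrow> real"
  assumes n: "2 \<le> n" and sm: "smooth_near0 X" "smooth_near0 Y"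
    and X: "bigO_at0 (n + 2) (\<lambda>t. X t - t ^ n)" and Y: "bigO_at0 (n + 2) (\<lambda>t. Y t - t ^ (n + 1))"
  obtains \<phi> c T where "near_identity \<phi>"
    "bigO_at0 (n + 4) (\<lambda>s. X (\<phi> s) - c * Y (\<phi> s) - s ^ n)"
    "bigO_at0 (n + 4) (\<lambda>s. Y (\<phi> s) - s ^ (n + 1) - T * s ^ (n + 3))"
proof -
  have comp: "smooth_near0 (\<lambda>s. f (\<phi> s))" if "smooth_near0 f" "near_identity \<phi>" for f :: "real \<Rightarrow> real" and \<phi>
    using smooth_near0_compose[OF that(1)] that(2) unfolding near_identity_def by blast
  obtain p2 where Y2: "bigO_at0 (Suc (n + 2)) (\<lambda>s. Y (reparam p2 2 s) - s ^ (n + 1))"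
    using reparam_kills_next_term[OF sm(2) Y, where j = 2] by auto
  have X2: "bigO_at0 (n + 1) (\<lambda>s. X (reparam p2 2 s) - s ^ n)"
    using bigO_at0_reparam_leading_term[OF X, of 2 "n + 1" p2] by simp
  have sm2: "smooth_near0 (\<lambda>s. X (reparam p2 2 s))" "smooth_near0 (\<lambda>s. Y (reparam p2 2 s))"
    using comp[OF sm(1)] comp[OF sm(2)] near_identity_reparam[of 2 p2] by auto
  obtain c where c: "bigO_at0 (Suc (n + 1)) (\<lambda>s. X (reparam p2 2 s) - s ^ n - s ^ (n + 1) *\<^sub>R c)"
    using bigO_at0_next_term[OF smooth_near0_diff[OF sm2(1) smooth_near0_power] X2] by blast
  \<comment> \<open>the shear \<open>(x, y) \<mapsto> (x - c y, y)\<close> removes the term of order \<open>n + 1\<close> from the first component\<close>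
  define X3 where "X3 s = X (reparam p2 2 s) - c * Y (reparam p2 2 s)" for s
  have "bigO_at0 (n + 2) (\<lambda>s. Y (reparam p2 2 s) - s ^ (n + 1))" using bigO_at0_mono[OF _ Y2] by simp
  then have "bigO_at0 (n + 2) (\<lambda>s. (X (reparam p2 2 s) - s ^ n - s ^ (n + 1) *\<^sub>R c) - c *\<^sub>R (Y (reparam p2 2 s) - s ^ (n + 1)))"
    using bigO_at0_diff[OF c bigO_at0_cscale] by simp
  then have X3: "bigO_at0 (n + 2) (\<lambda>s. X3 s - s ^ n)" unfolding X3_def by (simp add: algebra_simps)
  have sm3: "smooth_near0 X3" unfolding X3_def using sm2 by (intro smooth_near0_intros)
  obtain p3 where X4: "bigO_at0 (Suc (n + 2)) (\<lambda>s. X3 (reparam p3 3 s) - s ^ n)"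
    using reparam_kills_next_term[OF sm3 X3, where j = 3] n by auto
  have Y4: "bigO_at0 (n + 3) (\<lambda>s. Y (reparam p2 2 (reparam p3 3 s)) - s ^ (n + 1))"
    using bigO_at0_reparam_leading_term[OF Y2, of 3 "n + 3" p3] by simp
  have sm4: "smooth_near0 (\<lambda>s. X3 (reparam p3 3 s))"
    using comp[OF sm3] near_identity_reparam[of 3 p3] by auto
  obtain p4 where X5: "bigO_at0 (Suc (Suc (n + 2))) (\<lambda>s. X3 (reparam p3 3 (reparam p4 4 s)) - s ^ n)"
    using reparam_kills_next_term[OF sm4 X4, where j = 4] n by auto
  have Y5: "bigO_at0 (n + 3) (\<lambda>s. Y (reparam p2 2 (reparam p3 3 (reparam p4 4 s))) - s ^ (n + 1))"
    using bigO_at0_reparam_leading_term[OF Y4, of 4 "n + 3" p4] by simp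
  define \<phi> where "\<phi> s = reparam p2 2 (reparam p3 3 (reparam p4 4 s))" for s
  have "near_identity (\<lambda>s. reparam p3 3 (reparam p4 4 s))"
    by (rule near_identity_compose[OF near_identity_reparam near_identity_reparam]) simp_all
  then have \<phi>: "near_identity \<phi>"
    unfolding \<phi>_def by (rule near_identity_compose[OF near_identity_reparam, rotated]) simp
  have "smooth_near0 (\<lambda>s. Y (\<phi> s) - s ^ (n + 1))" by (intro smooth_near0_intros comp[OF sm(2) \<phi>])
  moreover have "bigO_at0 (n + 3) (\<lambda>s. Y (\<phi> s) - s ^ (n + 1))" using Y5 unfolding \<phi>_def .
  ultimately obtain T where T: "bigO_at0 (Suc (n + 3)) (\<lambda>s. Y (\<phi> s) - s ^ (n + 1) - s ^ (n + 3) *\<^sub>R T)"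
    by (rule bigO_at0_next_term)
  have "X (\<phi> s) - c * Y (\<phi> s) = X3 (reparam p3 3 (reparam p4 4 s))" for s
    unfolding \<phi>_def X3_def ..
  then have "bigO_at0 (n + 4) (\<lambda>s. X (\<phi> s) - c * Y (\<phi> s) - s ^ n)" using X5 by (simp add: eval_nat_numeral)
  moreover have "bigO_at0 (n + 4) (\<lambda>s. Y (\<phi> s) - s ^ (n + 1) - T * s ^ (n + 3))" using T by (simp add: mult.commute eval_nat_numeral)
  ultimately show ?thesis by (rule that[OF \<phi>])
qed

lemma A_equiv_normal_form_of_nth_deriv:
  fixes \<gamma> :: "real \<Rightarrow> real \<times> real"
  assumes n: "2 \<le> n" and sm: "smooth_near0 \<gamma>"
    and flat: "\<forall>k\<in>{1..n-1}. nth_deriv k \<gamma> 0 = 0"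
    and det: "det2 (nth_deriv n \<gamma> 0) (nth_deriv (Suc n) \<gamma> 0) \<noteq> 0"
  shows "\<exists>T h J. open J \<and> 0 \<in> J \<and> smooth_on J h \<and> (\<forall>k\<le>n+3. nth_deriv k h 0 = 0) \<and>
           A_equiv_at0 \<gamma> (\<lambda>s. (s^n, s^(n+1) + T * s^(n+3)) + h s)"
proof -
  define A B where "A = (1 / fact n) *\<^sub>R nth_deriv n \<gamma> 0" and "B = (1 / fact (n + 1)) *\<^sub>R nth_deriv (n + 1) \<gamma> 0"
  have "bigO_at0 (n + 2) (\<lambda>t. \<gamma> t - \<gamma> 0 - t ^ n *\<^sub>R A - t ^ (n + 1) *\<^sub>R B)"
    using two_term_expansion_of_nth_deriv[OF sm _ flat] n unfolding A_def B_def by simp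
  moreover have "det2 A B \<noteq> 0" using det by (simp add: A_def B_def det2_scaleR)
  ultimately obtain a1 b1 c1 a2 b2 c2 where N: "a1 * b2 - b1 * a2 \<noteq> 0"
    "bigO_at0 (n + 2) (\<lambda>t. fst (affine2 a1 b1 c1 a2 b2 c2 (\<gamma> t)) - t ^ n)"
    "bigO_at0 (n + 2) (\<lambda>t. snd (affine2 a1 b1 c1 a2 b2 c2 (\<gamma> t)) - t ^ (n + 1))"
    by (rule affine2_normalizes_two_term_expansion)
  define X Y where "X t = fst (affine2 a1 b1 c1 a2 b2 c2 (\<gamma> t))" and "Y t = snd (affine2 a1 b1 c1 a2 b2 c2 (\<gamma> t))" for t
  have "X = (\<lambda>t. a1 * fst (\<gamma> t) + b1 * snd (\<gamma> t) + c1)" "Y = (\<lambda>t. a2 * fst (\<gamma> t) + b2 * snd (\<gamma> t) + c2)"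
    by (simp_all add: X_def Y_def affine2_def fun_eq_iff)
  then have smXY: "smooth_near0 X" "smooth_near0 Y"
    by (simp_all add: smooth_near0_add smooth_near0_mult smooth_near0_const smooth_near0_fst smooth_near0_snd sm)
  obtain \<phi> c T where \<phi>: "near_identity \<phi>"
    and XY: "bigO_at0 (n + 4) (\<lambda>s. X (\<phi> s) - c * Y (\<phi> s) - s ^ n)"
      "bigO_at0 (n + 4) (\<lambda>s. Y (\<phi> s) - s ^ (n + 1) - T * s ^ (n + 3))"
    by (rule reparam_normal_form[OF n smXY N(2,3)[folded X_def Y_def]])
  define \<Psi> where "\<Psi> = affine2 (a1 - c * a2) (b1 - c * b2) (c1 - c * c2) a2 b2 c2"
  have "(a1 - c * a2) * b2 - (b1 - c * b2) * a2 \<noteq> 0" using N(1) by (simp add: algebra_simps)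
  then obtain \<Psi>i where \<Psi>: "local_diffeo_at (\<gamma> 0) \<Psi> \<Psi>i" unfolding \<Psi>_def by (rule local_diffeo_at_affine2)
  obtain \<psi> where \<psi>: "\<psi> 0 = 0" "local_diffeo_at 0 \<psi> \<phi>" by (rule local_diffeo_at_inverse_near_identity[OF \<phi>])
  define h where "h s = (X (\<phi> s) - c * Y (\<phi> s) - s ^ n, Y (\<phi> s) - s ^ (n + 1) - T * s ^ (n + 3))" for s
  have "\<Psi> (\<gamma> (\<phi> s)) = (s ^ n, s ^ (n + 1) + T * s ^ (n + 3)) + h s" for s
    unfolding \<Psi>_def h_def X_def Y_def affine2_def by (simp add: algebra_simps)
  then have "A_equiv_at0 \<gamma> (\<lambda>s. (s ^ n, s ^ (n + 1) + T * s ^ (n + 3)) + h s)"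
    unfolding A_equiv_at0_def using \<psi> \<Psi> by (intro exI[of _ \<psi>] exI[of _ \<phi>] exI[of _ \<Psi>] exI[of _ \<Psi>i]) simp
  moreover have sm_h: "smooth_near0 h"
  proof -
    have "smooth_near0 (\<lambda>s. X (\<phi> s))" "smooth_near0 (\<lambda>s. Y (\<phi> s))"
      using smooth_near0_compose smXY \<phi> unfolding near_identity_def by blast+
    then show ?thesis unfolding h_def by (intro smooth_near0_intros)
  qed
  moreover have "\<forall>k\<le>n+3. nth_deriv k h 0 = 0"
  proof -
    have "bigO_at0 (n + 4) h" unfolding h_def by (rule bigO_at0_Pair[OF XY])
    then show ?thesis using nth_deriv_zero_of_bigO_at0[OF sm_h] by simp
  qed
  moreover obtain J where "open J" "0 \<in> J" "smooth_on J h"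
    using sm_h smooth_on_iff_curve_smooth_on unfolding smooth_near0_def by blast
  ultimately show ?thesis by blast
qed

section \<open>Necessity of the derivative conditions\<close>

lemma bigO_at0_cong_open:
  assumes "open W" "0 \<in> W" "\<And>t. t \<in> W \<Longrightarrow> f t = g t" "bigO_at0 m f"
  shows "bigO_at0 m g"
proof -
  obtain \<delta> where "0 < \<delta>" "ball 0 \<delta> \<subseteq> W" using assms(1,2) open_contains_ball by blast
  then show ?thesis using assms(3) by (intro bigO_at0_cong[of \<delta> f g, OF _ _ assms(4)]) (auto simp: dist_norm)
qed

lemma bigO_at0_1_of_expansion:
  fixes \<psi> :: "real \<Rightarrow> real"
  assumes "bigO_at0 3 (\<lambda>t. \<psi> t - (a * t + b * t ^ 2))"
  shows "bigO_at0 1 \<psi>"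
proof -
  have "bigO_at0 1 (\<lambda>t. (\<psi> t - (a * t + b * t ^ 2)) + (a * t ^ 1 + b * t ^ 2))"
    using bigO_at0_add[OF bigO_at0_mono[OF _ assms] bigO_at0_add[OF bigO_at0_monom_real[of 1 1 a] bigO_at0_monom_real[of 1 2 b]]]
    by simp
  then show ?thesis by simp
qed

lemma two_term_expansion_reparam:
  fixes g :: "real \<Rightarrow> 'b::real_normed_vector" and \<psi> :: "real \<Rightarrow> real"
  assumes g: "bigO_at0 (n + 2) (\<lambda>s. g s - (s ^ n *\<^sub>R A + s ^ (n + 1) *\<^sub>R B))"
    and \<psi>: "bigO_at0 3 (\<lambda>t. \<psi> t - (a * t + b * t ^ 2))"
  shows "bigO_at0 (n + 2) (\<lambda>t. g (\<psi> t) - (t ^ n *\<^sub>R (a ^ n *\<^sub>R A)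
            + t ^ (n + 1) *\<^sub>R ((real n * a ^ (n - 1) * b) *\<^sub>R A + a ^ (n + 1) *\<^sub>R B)))"
proof -
  have const: "bigO_at0 0 (\<lambda>t. v)" for v :: 'b by (rule bigO_at0_0_of_isCont) simp
  have pn: "bigO_at0 (n + 2) (\<lambda>t. \<psi> t ^ n - (a ^ n * t ^ n + real n * a ^ (n - 1) * b * t ^ (n + 1)))"
    by (rule bigO_at0_power_expansion[OF \<psi>])
  have "bigO_at0 (n + 2) (\<lambda>t. \<psi> t ^ (n + 1) - (a ^ (n + 1) * t ^ (n + 1) + real (n + 1) * a ^ n * b * t ^ (n + 2)))"
    using bigO_at0_mono[OF _ bigO_at0_power_expansion[OF \<psi>, of "n + 1"]] by simp
  then have "bigO_at0 (n + 2) (\<lambda>t. (\<psi> t ^ (n + 1) - (a ^ (n + 1) * t ^ (n + 1) + real (n + 1) * a ^ n * b * t ^ (n + 2)))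
      + real (n + 1) * a ^ n * b * t ^ (n + 2))"
    by (rule bigO_at0_add[OF _ bigO_at0_monom_real]) simp
  then have pn1: "bigO_at0 (n + 2) (\<lambda>t. \<psi> t ^ (n + 1) - a ^ (n + 1) * t ^ (n + 1))" by simp
  have "bigO_at0 (n + 2) (\<lambda>t. (g (\<psi> t) - (\<psi> t ^ n *\<^sub>R A + \<psi> t ^ (n + 1) *\<^sub>R B))
      + (\<psi> t ^ n - (a ^ n * t ^ n + real n * a ^ (n - 1) * b * t ^ (n + 1))) *\<^sub>R A
      + (\<psi> t ^ (n + 1) - a ^ (n + 1) * t ^ (n + 1)) *\<^sub>R B)"
    using bigO_at0_comp[OF g bigO_at0_1_of_expansion[OF \<psi>]] bigO_at0_scaleR[OF pn const] bigO_at0_scaleR[OF pn1 const]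
    by (intro bigO_at0_add) auto
  then show ?thesis by (simp add: algebra_simps)
qed

lemma nth_deriv_of_derivative_two_term_expansion:
  fixes \<gamma> :: "real \<Rightarrow> 'b::real_normed_vector"
  assumes "smooth_near0 \<gamma>" and n: "n = Suc m"
    and "bigO_at0 (m + 2) (\<lambda>t. nth_deriv 1 \<gamma> t - (t ^ m *\<^sub>R (real n *\<^sub>R A) + t ^ (m + 1) *\<^sub>R (real (n + 1) *\<^sub>R B)))"
  shows "(\<forall>k\<in>{1..n-1}. nth_deriv k \<gamma> 0 = 0) \<and> nth_deriv n \<gamma> 0 = fact n *\<^sub>R A
     \<and> nth_deriv (Suc n) \<gamma> 0 = fact (Suc n) *\<^sub>R B"
proof -
  have co: "(\<forall>k<m. nth_deriv (Suc k) \<gamma> 0 = 0) \<and> nth_deriv (Suc m) \<gamma> 0 = fact m *\<^sub>R (real n *\<^sub>R A) \<and>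
      nth_deriv (Suc (m + 1)) \<gamma> 0 = fact (m + 1) *\<^sub>R (real (n + 1) *\<^sub>R B)"
    using nth_deriv_of_two_term_expansion[OF smooth_near0_nth_deriv[OF assms(1)] assms(3)]
    unfolding nth_deriv_Suc_right[symmetric] .
  have "nth_deriv k \<gamma> 0 = 0" if "k \<in> {1..n-1}" for k
  proof -
    have "k - 1 < m" using that n by auto
    then have "nth_deriv (Suc (k - 1)) \<gamma> 0 = 0" using co by blast
    moreover have "Suc (k - 1) = k" using that by auto
    ultimately show ?thesis by simp
  qed
  moreover have "fact m * real n = fact n" "fact (m + 1) * real (n + 1) = fact (Suc n)"
    using n by (simp_all add: algebra_simps)
  ultimately show ?thesis using co n by simp
qed

lemma derivative_two_term_expansion_plane_chain:
  fixes F :: "real \<Rightarrow> real \<times> real" and G :: "real \<times> real \<Rightarrow> 'c::real_normed_vector"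
  assumes n: "n = Suc m" "1 \<le> m" and W: "open W" "0 \<in> W" and F: "curve_smooth_on W F" "F ` W \<subseteq> V"
    and G: "smooth_on V G" and \<gamma>: "\<And>t. t \<in> W \<Longrightarrow> \<gamma> t = G (F t)"
    and exp: "bigO_at0 (n + 2) (\<lambda>t. F t - (t ^ n *\<^sub>R A + t ^ (n + 1) *\<^sub>R B))"
  defines "D \<equiv> frechet_derivative G (at (F 0))"
  shows "bigO_at0 (m + 2) (\<lambda>t. nth_deriv 1 \<gamma> t - (t ^ m *\<^sub>R (real n *\<^sub>R D A) + t ^ (m + 1) *\<^sub>R (real (n + 1) *\<^sub>R D B)))"
proof -
  define F' where "F' = nth_deriv 1 F"
  define q where "q v t = frechet_derivative G (at (F t)) v" for v t
  have Fd: "(F has_vector_derivative F' t) (at t)" if "t \<in> W" for t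
    using curve_smooth_on_nth_deriv[OF W(1) F(1), of 0] that unfolding F'_def by simp
  have Gd: "G differentiable (at (F t))" if "t \<in> W" for t
    using smooth_on_frechet_derivative(1)[OF G] F(2) that by blast
  have dF: "bigO_at0 (m + 2) (\<lambda>t. F' t - (t ^ m *\<^sub>R (real n *\<^sub>R A) + t ^ n *\<^sub>R (real (n + 1) *\<^sub>R B)))"
    using two_term_expansion_derivative[OF smooth_near0I[OF W F(1)] n(1) exp] n(1) unfolding F'_def by simp
  have F'0: "F' 0 = 0"
  proof -
    have "bigO_at0 (Suc (m + 1)) (\<lambda>t. F' t - (t ^ m *\<^sub>R (real n *\<^sub>R A) + t ^ n *\<^sub>R (real (n + 1) *\<^sub>R B)))"
      using dF by simp
    from bigO_at0_Suc_imp_zero[OF this] show ?thesis using n by (simp add: power_0_left)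
  qed
  have "bigO_at0 m (\<lambda>t. (F' t - (t ^ m *\<^sub>R (real n *\<^sub>R A) + t ^ n *\<^sub>R (real (n + 1) *\<^sub>R B)))
      + (t ^ m *\<^sub>R (real n *\<^sub>R A) + t ^ n *\<^sub>R (real (n + 1) *\<^sub>R B)))"
    by (intro bigO_at0_add bigO_at0_mono[OF _ dF] bigO_at0_monom) (simp_all add: n)
  then have F'm: "bigO_at0 m F'" by simp
  have q2: "bigO_at0 2 (\<lambda>t. q v t - q v 0)" for v
  proof -
    have sq: "curve_smooth_on W (q v)"
      unfolding q_def by (rule curve_smooth_on_compose_plane[OF smooth_on_frechet_derivative(2)[OF G] F])
    have d0: "(\<lambda>x. frechet_derivative G (at x) v) differentiable (at (F 0))"
      using smooth_on_frechet_derivative(1)[OF smooth_on_frechet_derivative(2)[OF G]] F(2) W(2) by blast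
    have "((q v) has_vector_derivative frechet_derivative (\<lambda>x. frechet_derivative G (at x) v) (at (F 0)) (F' 0)) (at 0)"
      unfolding q_def by (rule has_vector_derivative_plane_chain[OF d0 Fd[OF W(2)]])
    moreover have "frechet_derivative (\<lambda>x. frechet_derivative G (at x) v) (at (F 0)) (F' 0) = 0"
      unfolding F'0 by (rule linear_0[OF linear_frechet_derivative[OF d0]])
    ultimately have "nth_deriv 1 (q v) 0 = 0" by (simp add: vector_derivative_at nth_deriv.simps(2))
    then show ?thesis using taylor_bigO_at0[OF smooth_near0I[OF W sq], of 1] by (simp add: numeral_2_eq_2)
  qed
  have lin: "linear (frechet_derivative G (at (F t)))" if "t \<in> W" for t
    using linear_frechet_derivative Gd that by blast
  have eqW: "nth_deriv 1 \<gamma> t - D (F' t) = fst (F' t) *\<^sub>R (q (1, 0) t - q (1, 0) 0) + snd (F' t) *\<^sub>R (q (0, 1) t - q (0, 1) 0)"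
    if "t \<in> W" for t
  proof -
    have "((\<lambda>t. G (F t)) has_vector_derivative q (F' t) t) (at t)"
      unfolding q_def by (rule has_vector_derivative_plane_chain[OF Gd[OF that] Fd[OF that]])
    then have "(\<gamma> has_vector_derivative q (F' t) t) (at t)"
      by (rule has_vector_derivative_transform_within_open[OF _ W(1) that]) (simp add: \<gamma>)
    then have "nth_deriv 1 \<gamma> t = q (F' t) t" by (simp add: vector_derivative_at nth_deriv.simps(2))
    moreover have "q (F' t) t = fst (F' t) *\<^sub>R q (1, 0) t + snd (F' t) *\<^sub>R q (0, 1) t"
      unfolding q_def by (rule linear_plane_decompose[OF lin[OF that]])
    moreover have "D (F' t) = fst (F' t) *\<^sub>R q (1, 0) 0 + snd (F' t) *\<^sub>R q (0, 1) 0"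
      unfolding q_def D_def by (rule linear_plane_decompose[OF lin[OF W(2)]])
    ultimately show ?thesis by (simp add: scaleR_diff_right)
  qed
  have "bigO_at0 (m + 2) (\<lambda>t. fst (F' t) *\<^sub>R (q (1, 0) t - q (1, 0) 0) + snd (F' t) *\<^sub>R (q (0, 1) t - q (0, 1) 0))"
    by (intro bigO_at0_add bigO_at0_scaleR bigO_at0_fst bigO_at0_snd F'm q2)
  then have a: "bigO_at0 (m + 2) (\<lambda>t. nth_deriv 1 \<gamma> t - D (F' t))"
    by (rule bigO_at0_cong_open[OF W, rotated]) (metis eqW)
  have "linear D" unfolding D_def by (rule lin[OF W(2)])
  then have b: "bigO_at0 (m + 2) (\<lambda>t. D (F' t) - (t ^ m *\<^sub>R (real n *\<^sub>R D A) + t ^ (m + 1) *\<^sub>R (real (n + 1) *\<^sub>R D B)))"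
    using bigO_at0_bounded_linear[OF _ dF, of D] n
    by (simp add: linear_conv_bounded_linear linear_diff linear_add linear_scale)
  show ?thesis using bigO_at0_add[OF a b] by (simp add: algebra_simps)
qed

lemma deriv_neq_0_of_left_inverse:
  fixes f g :: "real \<Rightarrow> real"
  assumes "open U" "x \<in> U" "\<And>y. y \<in> U \<Longrightarrow> g (f y) = y"
    and "(f has_real_derivative a) (at x)" "(g has_real_derivative b) (at (f x))"
  shows "a \<noteq> 0"
proof -
  have "((\<lambda>y. g (f y)) has_real_derivative b * a) (at x)" using assms(5,4) by (rule DERIV_chain2)
  moreover have "((\<lambda>y. g (f y)) has_real_derivative 1) (at x)"
    by (rule has_field_derivative_transform_within_open[OF DERIV_ident assms(1,2)]) (use assms(3) in auto)
  ultimately have "b * a = 1" by (rule DERIV_unique)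
  then show ?thesis by auto
qed

lemma A_equiv_at0_local_data:
  fixes \<gamma>1 \<gamma>2 :: "real \<Rightarrow> real \<times> real"
  assumes AE: "A_equiv_at0 \<gamma>1 \<gamma>2" and I: "open I" "0 \<in> I" "curve_smooth_on I \<gamma>1"
  obtains \<psi> \<Psi> \<Psi>i W V where "open W" "0 \<in> W" "W \<subseteq> I" "\<psi> 0 = 0" "smooth_near0 \<psi>" "nth_deriv 1 \<psi> 0 \<noteq> 0"
    "smooth_on V \<Psi>i" "curve_smooth_on W (\<lambda>t. \<Psi> (\<gamma>1 t))"
    "\<And>t. t \<in> W \<Longrightarrow> \<Psi> (\<gamma>1 t) \<in> V \<and> \<gamma>1 t = \<Psi>i (\<Psi> (\<gamma>1 t)) \<and> \<Psi> (\<gamma>1 t) = \<gamma>2 (\<psi> t)"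
    "det2 (frechet_derivative \<Psi>i (at (\<Psi> (\<gamma>1 0))) (1, 0)) (frechet_derivative \<Psi>i (at (\<Psi> (\<gamma>1 0))) (0, 1)) \<noteq> 0"
proof -
  obtain \<psi> \<psi>i \<Psi> \<Psi>i where \<psi>0: "\<psi> 0 = 0" and ld1: "local_diffeo_at 0 \<psi> \<psi>i"
    and ld2: "local_diffeo_at (\<gamma>1 0) \<Psi> \<Psi>i" and ev: "\<forall>\<^sub>F s in nhds 0. \<Psi> (\<gamma>1 (\<psi>i s)) = \<gamma>2 s"
    using AE unfolding A_equiv_at0_def by blast
  obtain U1 V1 where U1: "open U1" "0 \<in> U1" "\<psi> ` U1 = V1" "smooth_on U1 \<psi>" "\<forall>x\<in>U1. \<psi>i (\<psi> x) = x"
    and V1: "open V1" "smooth_on V1 \<psi>i"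
    using ld1 unfolding local_diffeo_at_def by blast
  obtain U2 V2 where U2: "open U2" "\<gamma>1 0 \<in> U2" "\<Psi> ` U2 = V2" "smooth_on U2 \<Psi>" "\<forall>x\<in>U2. \<Psi>i (\<Psi> x) = x"
    and V2: "open V2" "smooth_on V2 \<Psi>i" "\<forall>y\<in>V2. \<Psi> (\<Psi>i y) = y"
    using ld2 unfolding local_diffeo_at_def by blast
  obtain N where N: "open N" "0 \<in> N" "\<forall>s\<in>N. \<Psi> (\<gamma>1 (\<psi>i s)) = \<gamma>2 s"
    using ev unfolding eventually_nhds by blast
  have sm\<psi>: "curve_smooth_on U1 \<psi>" using U1(4) smooth_on_iff_curve_smooth_on[OF U1(1)] by blast
  have "continuous_on I \<gamma>1" "continuous_on U1 \<psi>"
    using curve_Ck_on_imp_continuous_on[of 0 I \<gamma>1] curve_Ck_on_imp_continuous_on[of 0 U1 \<psi>] I(3) sm\<psi>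
    unfolding curve_smooth_on_def by blast+
  then have c\<gamma>: "continuous_on (U1 \<inter> I) \<gamma>1" and c\<psi>: "continuous_on (U1 \<inter> I \<inter> \<gamma>1 -` U2) \<psi>"
    by (auto intro: continuous_on_subset)
  define W where "W = U1 \<inter> I \<inter> \<gamma>1 -` U2 \<inter> \<psi> -` N"
  have "open (U1 \<inter> I \<inter> \<gamma>1 -` U2)" using continuous_open_preimage[OF c\<gamma>] U1(1) I(1) U2(1) by blast
  then have W: "open W" "0 \<in> W" "W \<subseteq> I"
    unfolding W_def using continuous_open_preimage[OF c\<psi>] N(1,2) U1(2) U2(2) I(2) \<psi>0 by auto
  have "\<Psi> (\<gamma>1 t) \<in> V2 \<and> \<gamma>1 t = \<Psi>i (\<Psi> (\<gamma>1 t)) \<and> \<Psi> (\<gamma>1 t) = \<gamma>2 (\<psi> t)" if "t \<in> W" for t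
  proof -
    have "\<psi> t \<in> N" "t \<in> U1" "\<gamma>1 t \<in> U2" using that unfolding W_def by auto
    then show ?thesis using U1(5) U2(3,5) N(3) by force
  qed
  moreover have "curve_smooth_on W (\<lambda>t. \<Psi> (\<gamma>1 t))"
    by (rule curve_smooth_on_compose_plane[OF U2(4) curve_smooth_on_subset[OF W(3) I(3)]]) (auto simp: W_def)
  moreover have "nth_deriv 1 \<psi> 0 \<noteq> 0"
  proof (rule deriv_neq_0_of_left_inverse[OF U1(1,2), where f = \<psi> and g = \<psi>i and b = "nth_deriv 1 \<psi>i 0"])
    show "\<And>y. y \<in> U1 \<Longrightarrow> \<psi>i (\<psi> y) = y" using U1(5) by blast
    show "(\<psi> has_real_derivative nth_deriv 1 \<psi> 0) (at 0)"
      using curve_smooth_on_nth_deriv[OF U1(1) sm\<psi>, of 0] U1(2)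
      by (simp add: has_real_derivative_iff_has_vector_derivative)
    have "curve_smooth_on V1 \<psi>i" using V1 smooth_on_iff_curve_smooth_on by blast
    moreover have "\<psi> 0 \<in> V1" using U1(2,3) by blast
    ultimately show "(\<psi>i has_real_derivative nth_deriv 1 \<psi>i 0) (at (\<psi> 0))"
      using curve_smooth_on_nth_deriv[OF V1(1), of \<psi>i 0] \<psi>0
      by (simp add: has_real_derivative_iff_has_vector_derivative)
  qed
  moreover have "det2 (frechet_derivative \<Psi>i (at (\<Psi> (\<gamma>1 0))) (1, 0)) (frechet_derivative \<Psi>i (at (\<Psi> (\<gamma>1 0))) (0, 1)) \<noteq> 0"
  proof (rule det2_frechet_derivative_neq_0[of V2])
    show "\<Psi> (\<gamma>1 0) \<in> V2" using U2(2,3) by blast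
    show "\<Psi>i differentiable (at (\<Psi> (\<gamma>1 0)))" using smooth_on_frechet_derivative(1)[OF V2(2)] \<open>\<Psi> (\<gamma>1 0) \<in> V2\<close> by blast
    show "\<Psi> differentiable (at (\<Psi>i (\<Psi> (\<gamma>1 0))))" using smooth_on_frechet_derivative(1)[OF U2(4)] U2(2,5) by simp
  qed (use V2 in auto)
  ultimately show ?thesis
    using that[OF W \<psi>0 smooth_near0I[OF U1(1,2) sm\<psi>] _ V2(2)] by blast
qed

lemma nth_deriv_conditions_of_A_equiv_normal_form:
  fixes \<gamma> h :: "real \<Rightarrow> real \<times> real"
  assumes n: "2 \<le> n" and I: "open I" "0 \<in> I" "curve_smooth_on I \<gamma>"
    and h: "smooth_near0 h" "\<forall>k\<le>n+3. nth_deriv k h 0 = 0"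
    and AE: "A_equiv_at0 \<gamma> (\<lambda>s. (s^n, s^(n+1) + T * s^(n+3)) + h s)"
  shows "(\<forall>k\<in>{1..n-1}. nth_deriv k \<gamma> 0 = 0) \<and> det2 (nth_deriv n \<gamma> 0) (nth_deriv (Suc n) \<gamma> 0) \<noteq> 0"
proof -
  define g where "g s = (s^n, s^(n+1) + T * s^(n+3)) + h s" for s
  obtain \<psi> \<Psi> \<Psi>i W V where W: "open W" "0 \<in> W" "W \<subseteq> I" and \<psi>: "\<psi> 0 = 0" "smooth_near0 \<psi>" "nth_deriv 1 \<psi> 0 \<noteq> 0"
    and \<Psi>i: "smooth_on V \<Psi>i" and smF: "curve_smooth_on W (\<lambda>t. \<Psi> (\<gamma> t))"
    and F: "\<And>t. t \<in> W \<Longrightarrow> \<Psi> (\<gamma> t) \<in> V \<and> \<gamma> t = \<Psi>i (\<Psi> (\<gamma> t)) \<and> \<Psi> (\<gamma> t) = g (\<psi> t)"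
    and det: "det2 (frechet_derivative \<Psi>i (at (\<Psi> (\<gamma> 0))) (1, 0)) (frechet_derivative \<Psi>i (at (\<Psi> (\<gamma> 0))) (0, 1)) \<noteq> 0"
    by (rule A_equiv_at0_local_data[OF AE[folded g_def] I]) blast
  define a b where "a = nth_deriv 1 \<psi> 0" and "b = nth_deriv 2 \<psi> 0 / 2"
  have "(\<Sum>k\<le>2. (t ^ k / fact k) *\<^sub>R nth_deriv k \<psi> 0) = a * t + b * t ^ 2" for t
    unfolding a_def b_def by (simp add: numeral_2_eq_2 \<psi>(1) field_simps)
  then have \<psi>exp: "bigO_at0 3 (\<lambda>t. \<psi> t - (a * t + b * t ^ 2))"
    using taylor_bigO_at0[OF \<psi>(2), of 2] by (simp add: numeral_3_eq_3)
  have "bigO_at0 (n + 2) (\<lambda>s. (0::real, T * s ^ (n + 3)))"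
    by (intro bigO_at0_Pair bigO_at0_zero bigO_at0_monom_real) simp
  moreover have "bigO_at0 (n + 2) h" by (rule bigO_at0_of_nth_deriv_zero[OF h(1)]) (use h(2) in auto)
  ultimately have "bigO_at0 (n + 2) (\<lambda>s. (0, T * s ^ (n + 3)) + h s)" by (rule bigO_at0_add)
  moreover have "g s - (s ^ n *\<^sub>R (1, 0) + s ^ (n + 1) *\<^sub>R (0, 1)) = (0, T * s ^ (n + 3)) + h s" for s
    by (simp add: g_def prod_eq_iff)
  ultimately have gexp: "bigO_at0 (n + 2) (\<lambda>s. g s - (s ^ n *\<^sub>R (1, 0) + s ^ (n + 1) *\<^sub>R (0, 1)))"
    by simp
  define A B where "A = a ^ n *\<^sub>R (1::real, 0::real)"
    and "B = (real n * a ^ (n - 1) * b) *\<^sub>R (1::real, 0::real) + a ^ (n + 1) *\<^sub>R (0, 1)"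
  define F where "F t = \<Psi> (\<gamma> t)" for t
  have FV: "F ` W \<subseteq> V" and \<gamma>F: "\<And>t. t \<in> W \<Longrightarrow> \<gamma> t = \<Psi>i (F t)"
    and Fg: "\<And>t. t \<in> W \<Longrightarrow> F t = g (\<psi> t)"
    using F unfolding F_def by blast+
  have "bigO_at0 (n + 2) (\<lambda>t. g (\<psi> t) - (t ^ n *\<^sub>R A + t ^ (n + 1) *\<^sub>R B))"
    unfolding A_def B_def by (rule two_term_expansion_reparam[OF gexp \<psi>exp])
  then have Fexp: "bigO_at0 (n + 2) (\<lambda>t. F t - (t ^ n *\<^sub>R A + t ^ (n + 1) *\<^sub>R B))"
    by (rule bigO_at0_cong_open[OF W(1,2), rotated]) (metis Fg)
  obtain m where m: "n = Suc m" "1 \<le> m" using n by (cases n) auto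
  define D where "D = frechet_derivative \<Psi>i (at (F 0))"
  have "bigO_at0 (m + 2) (\<lambda>t. nth_deriv 1 \<gamma> t - (t ^ m *\<^sub>R (real n *\<^sub>R D A) + t ^ (m + 1) *\<^sub>R (real (n + 1) *\<^sub>R D B)))"
    unfolding D_def using smF[folded F_def]
    by (rule derivative_two_term_expansion_plane_chain[OF m W(1,2) _ FV \<Psi>i \<gamma>F Fexp])
  from nth_deriv_of_derivative_two_term_expansion[OF smooth_near0I[OF I] m(1) this]
  have \<gamma>: "\<forall>k\<in>{1..n-1}. nth_deriv k \<gamma> 0 = 0" "nth_deriv n \<gamma> 0 = fact n *\<^sub>R D A"
    "nth_deriv (Suc n) \<gamma> 0 = fact (Suc n) *\<^sub>R D B"
    by blast+
  have "linear D"
    using FV W(2) smooth_on_frechet_derivative(1)[OF \<Psi>i] linear_frechet_derivative unfolding D_def by blast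
  then have "det2 (nth_deriv n \<gamma> 0) (nth_deriv (Suc n) \<gamma> 0) = fact n * fact (Suc n) * (det2 (D (1, 0)) (D (0, 1)) * det2 A B)"
    unfolding \<gamma>(2,3) det2_scaleR det2_linear_image[OF \<open>linear D\<close>, of A B] by simp
  moreover have "det2 (D (1, 0)) (D (0, 1)) \<noteq> 0" using det unfolding D_def F_def .
  moreover have "det2 A B = a ^ n * a ^ (n + 1)" unfolding A_def B_def det2_def by simp
  ultimately show ?thesis using \<gamma>(1) \<psi>(3) unfolding a_def by simp
qed

theorem mainTheorem7:
  fixes n :: nat and I :: "real set" and \<gamma> :: "real \<Rightarrow> real \<times> real"
  assumes "n \<ge> 2" and "is_interval I" and "open I" and "0 \<in> I"
    and "smooth_on I \<gamma>"
  shows "((\<forall>k\<in>{1..n-1}. nth_deriv k \<gamma> 0 = 0) \<and>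
          det2 (nth_deriv n \<gamma> 0) (nth_deriv (Suc n) \<gamma> 0) \<noteq> 0)
     \<longleftrightarrow> (\<exists>T::real. \<exists>h :: real \<Rightarrow> real \<times> real. \<exists>J.
            open J \<and> 0 \<in> J \<and> smooth_on J h \<and>
            (\<forall>k\<le>n+3. nth_deriv k h 0 = 0) \<and>
            A_equiv_at0 \<gamma> (\<lambda>s. (s^n, s^(n+1) + T * s^(n+3)) + h s))"
proof
  have \<gamma>: "curve_smooth_on I \<gamma>" using assms(5) smooth_on_iff_curve_smooth_on[OF assms(3)] by blast
  show "\<exists>T h J. open J \<and> 0 \<in> J \<and> smooth_on J h \<and> (\<forall>k\<le>n+3. nth_deriv k h 0 = 0) \<and>
      A_equiv_at0 \<gamma> (\<lambda>s. (s^n, s^(n+1) + T * s^(n+3)) + h s)"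
    if "(\<forall>k\<in>{1..n-1}. nth_deriv k \<gamma> 0 = 0) \<and> det2 (nth_deriv n \<gamma> 0) (nth_deriv (Suc n) \<gamma> 0) \<noteq> 0"
    using A_equiv_normal_form_of_nth_deriv[OF assms(1) smooth_near0I[OF assms(3,4) \<gamma>] conjunct1[OF that] conjunct2[OF that]] .
  show "(\<forall>k\<in>{1..n-1}. nth_deriv k \<gamma> 0 = 0) \<and> det2 (nth_deriv n \<gamma> 0) (nth_deriv (Suc n) \<gamma> 0) \<noteq> 0"
    if rhs: "\<exists>T h J. open J \<and> 0 \<in> J \<and> smooth_on J h \<and> (\<forall>k\<le>n+3. nth_deriv k h 0 = 0) \<and>
      A_equiv_at0 \<gamma> (\<lambda>s. (s^n, s^(n+1) + T * s^(n+3)) + h s)"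
  proof -
    obtain T h J where J: "open J" "0 \<in> J" "smooth_on J h" and h: "\<forall>k\<le>n+3. nth_deriv k h 0 = 0"
      and AE: "A_equiv_at0 \<gamma> (\<lambda>s. (s^n, s^(n+1) + T * s^(n+3)) + h s)"
      using rhs by blast
    have "curve_smooth_on J h" using J(3) smooth_on_iff_curve_smooth_on[OF J(1)] by blast
    then have "smooth_near0 h" by (rule smooth_near0I[OF J(1,2)])
    then show ?thesis by (rule nth_deriv_conditions_of_A_equiv_normal_form[OF assms(1,3,4) \<gamma> _ h AE])
  qed
qed

end
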